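(* Fix $\lambda\in(-\infty,2]$, $p>0$ and $a\in(0,1)$. There exist $b_0>0$ and $C>0$ such that for every $b\ge b_0$ there exists $c_0>0$ such that for all $c\in(-c_0b^{-(1-a)},c_0b^{-(1-a)})$ the solution $\Psi_c$ (continued as a solution of $\Psi''-\frac{1}{p^2}\Psi+|\Psi|^{2p}\Psi=-\lambda e^{2t}\Psi+e^{4t}\Psi$) satisfies, for all $t\in[-(1-a)p\log b,0]$, $$|\Psi_c(t)-c\Upsilon_h(t)|\le C|c|^{2p+1}b^{2p(1-a)}e^{-t/p},$$ with the same bound holding for $\Psi_c'(t)-c\Upsilon_h'(t)$.
   Context: Let $\alpha=\frac{p+1}{2p}-\frac{\lambda}{4}$, $\beta=1+\frac1p$, and let $\mathfrak{U}(z;\alpha,\beta)$ be the Tricomi confluent hypergeometric function (the solution of $zu''+(\beta-z)u'-\alpha u=0$ with $\mathfrak{U}(z;\alpha,\beta)\sim z^{-\alpha}(1+O(z^{-1}))$ as $z\to+\infty$). Define $\Upsilon_h(t)=e^{t/p}e^{-\frac12e^{2t}}\mathfrak{U}(e^{2t};\alpha,\beta)$ and let $\Upsilon_g$ be the solution of $\Upsilon''-\frac1{p^2}\Upsilon+\lambda e^{2t}\Upsilon-e^{4t}\Upsilon=0$ with $\Upsilon_h\Upsilon_g'-\Upsilon_h'\Upsilon_g=1$ and $\Upsilon_g(t)\sim\frac12e^{-(1+\frac{\lambda}{2})t}e^{\frac12e^{2t}}$ as $t\to+\infty$. For small $|c|$, $\Psi_c$ denotes the solution of $\Psi''-\frac{1}{p^2}\Psi+|\Psi|^{2p}\Psi=-\lambda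 e^{2t}\Psi+e^{4t}\Psi$ such that $\eta=\Psi_c-c\Upsilon_h$ satisfies, for $t\ge0$, $\eta(t)=\int_t^\infty(\Upsilon_h(t')\Upsilon_g(t)-\Upsilon_h(t)\Upsilon_g(t'))|c\Upsilon_h(t')+\eta(t')|^{2p}(c\Upsilon_h(t')+\eta(t'))dt'$ and $|\eta(t)|\le C|c|^{2p+1}e^{-(1-\frac{\lambda}{2})t}e^{-\frac12 e^{2t}}$ on $[0,\infty)$; this solution decays as $\Psi_c(t)\sim ce^{-\frac{(2-\lambda)t}{2}}e^{-\frac12e^{2t}}$ as $t\to+\infty$. *)

theory Defs
  imports "HOL-Analysis.Analysis" "HOL-Library.Landau_Symbols"
begin

definition kummer_alpha :: "real \<Rightarrow> real \<Rightarrow> real" where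
  "kummer_alpha p lam = (p + 1) / (2 * p) - lam / 4"

definition kummer_beta :: "real \<Rightarrow> real" where
  "kummer_beta p = 1 + 1 / p"

definition is_tricomi_U :: "real \<Rightarrow> real \<Rightarrow> (real \<Rightarrow> real) \<Rightarrow> bool" where
  "is_tricomi_U al be U \<longleftrightarrow>
     (\<exists>dU d2U. \<forall>z>0. (U has_real_derivative dU z) (at z)
                  \<and> (dU has_real_derivative d2U z) (at z)
                  \<and> z * d2U z + (be - z) * dU z - al * U z = 0)
   \<and> (\<lambda>z. U z * z powr al - 1) \<in> O[at_top](\<lambda>z. 1 / z)"

definition Upsilon_h :: "(real \<Rightarrow> real) \<Rightarrow> real \<Rightarrow> real \<Rightarrow> real" where
  "Upsilon_h U p t = exp (t / p) * exp (- exp (2 * t) / 2) * U (exp (2 * t))"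

definition is_Upsilon_g :: "real \<Rightarrow> real \<Rightarrow> (real \<Rightarrow> real) \<Rightarrow> (real \<Rightarrow> real) \<Rightarrow> bool" where
  "is_Upsilon_g p lam Yh Yg \<longleftrightarrow>
     (\<exists>dYg. \<forall>t. (Yg has_real_derivative dYg t) (at t)
              \<and> (dYg has_real_derivative
                    ((1 / p^2 - lam * exp (2 * t) + exp (4 * t)) * Yg t)) (at t)
              \<and> Yh t * dYg t - deriv Yh t * Yg t = 1)
   \<and> ((\<lambda>t. Yg t / ((1/2) * exp (- (1 + lam / 2) * t) * exp (exp (2 * t) / 2)))
        \<longlongrightarrow> 1) at_top"

definition is_Psi_c :: "real \<Rightarrow> real \<Rightarrow> (real \<Rightarrow> real) \<Rightarrow> (real \<Rightarrow> real) \<Rightarrow> real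
                        \<Rightarrow> (real \<Rightarrow> real) \<Rightarrow> bool" where
  "is_Psi_c p lam Yh Yg c Psi \<longleftrightarrow>
     (\<exists>dPsi. \<forall>t. (Psi has_real_derivative dPsi t) (at t)
              \<and> (dPsi has_real_derivative
                    (Psi t / p^2 - \<bar>Psi t\<bar> powr (2 * p) * Psi t
                     - lam * exp (2 * t) * Psi t + exp (4 * t) * Psi t)) (at t))
   \<and> (\<forall>t\<ge>0. ((\<lambda>s. (Yh s * Yg t - Yh t * Yg s)
                    * (\<bar>Psi s\<bar> powr (2 * p) * Psi s)) has_integral (Psi t - c * Yh t)) {t..})
   \<and> (\<exists>C. \<forall>t\<ge>0. \<bar>Psi t - c * Yh t\<bar>
                 \<le> C * \<bar>c\<bar> powr (2 * p + 1) * exp (- (1 - lam / 2) * t) * exp (- exp (2 * t) / 2))"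

end

theory Submission
  imports Defs
begin

text \<open>
  Write \<open>\<eta> = \<Psi>\<^sub>c - c \<Upsilon>\<^sub>h\<close> and \<open>w(t) = exp(-(1 - \<lambda>/2) t - e^(2t)/2)\<close>.
  On \<open>t \<ge> 0\<close>, since \<open>|\<Upsilon>\<^sub>h| \<lesssim> w\<close> and \<open>|\<Upsilon>\<^sub>g| \<lesssim> e^(-2t)/w\<close>, the kernel of the integral equation for
  \<open>\<eta>\<close> is \<open>O(e^(-2s))\<close>, and a continuity argument run from \<open>t = +\<infinity>\<close> gives \<open>|\<eta>| \<lesssim> |c|^(2p+1) w\<close>;
  the mean value theorem then also bounds \<open>\<eta>'(0)\<close>.

  On \<open>[-L, 0]\<close> with \<open>L = (1 - a) p log b\<close>, the remainder solves
  \<open>\<eta>'' = \<eta>/p^2 + (e^(4t) - \<lambda> e^(2t)) \<eta> - N(c \<Upsilon>\<^sub>h + \<eta>)\<close>, \<open>N(y) = |y|^(2p) y\<close>. The energy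
  \<open>(p^2 \<eta>'^2 + \<eta>^2 + \<epsilon>)^(1/2)\<close> grows at most like \<open>e^(-t/p)\<close> towards \<open>-\<infinity>\<close>, up to the linear
  term, which is \<open>O(e^(2t))\<close>, and the nonlinear forcing. While \<open>|\<eta>| \<le> |c| e^(-t/p)\<close> that forcing is
  \<open>O(|c|^(2p+1) e^(-2t) e^(-t/p))\<close>, which costs a factor \<open>e^(2L) = b^(2p(1-a))\<close>; a second continuity
  argument therefore closes as soon as \<open>|c|^(2p) b^(2p(1-a))\<close> is small, i.e. \<open>|c| < c\<^sub>0 b^(-(1-a))\<close>.
  For \<open>c = 0\<close> the same estimate with \<open>\<epsilon> \<rightarrow> 0\<close> forces \<open>\<eta> = 0\<close>.
\<close>

text \<open>The decay rate of \<open>\<Upsilon>\<^sub>h(t) = e^(t/p) e^(-e^(2t)/2) U(e^(2t))\<close> at \<open>+\<infinity>\<close>, as \<open>U(z) \<sim> z^(-\<alpha>)\<close>.\<close>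
definition decay_weight :: "real \<Rightarrow> real \<Rightarrow> real" where
  "decay_weight lam t = exp (- (1 - lam / 2) * t - exp (2 * t) / 2)"

lemma decay_weight_pos: "decay_weight lam t > 0"
  unfolding decay_weight_def by simp

lemma decay_weight_eq: "exp (- (1 - lam / 2) * t) * exp (- exp (2 * t) / 2) = decay_weight lam t"
  unfolding decay_weight_def by (simp flip: exp_add)

lemma exp_double_diff_ge:
  fixes s t :: real
  assumes "0 \<le> t" "t \<le> s"
  shows "2 * (s - t) \<le> exp (2 * s) - exp (2 * t)"
proof -
  have "exp (2 * s) = exp (2 * t) * exp (2 * (s - t))"
    by (simp flip: exp_add add: algebra_simps)
  also have "\<dots> \<ge> exp (2 * t) * (1 + 2 * (s - t))"
    by (intro mult_left_mono) (use exp_ge_add_one_self[of "2 * (s - t)"] in auto)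
  finally have "exp (2 * s) \<ge> exp (2 * t) + exp (2 * t) * (2 * (s - t))"
    by (simp add: algebra_simps)
  moreover have "exp (2 * t) * (2 * (s - t)) \<ge> 1 * (2 * (s - t))"
    by (intro mult_right_mono) (use assms in auto)
  ultimately show ?thesis by linarith
qed

lemma decay_weight_antimono:
  assumes "lam \<le> 2" "0 \<le> t" "t \<le> s"
  shows "decay_weight lam s \<le> decay_weight lam t"
proof -
  have "(1 - lam / 2) * t \<le> (1 - lam / 2) * s" using assms by (intro mult_left_mono) auto
  moreover have "exp (2 * t) \<le> exp (2 * s)" using assms by simp
  ultimately have "- (1 - lam / 2) * s - exp (2 * s) / 2 \<le> - (1 - lam / 2) * t - exp (2 * t) / 2"
    by linarith
  then show ?thesis unfolding decay_weight_def by simp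
qed

lemma decay_weight_le_one:
  assumes "lam \<le> 2" "0 \<le> t"
  shows "decay_weight lam t \<le> 1"
proof -
  have "(1 - lam / 2) * t \<ge> 0" using assms by simp
  moreover have "exp (2 * t) > 0" by simp
  ultimately have "- (1 - lam / 2) * t - exp (2 * t) / 2 \<le> 0" by linarith
  then show ?thesis unfolding decay_weight_def by simp
qed

lemma decay_weight_sq_le:
  assumes "lam \<le> 2" "0 \<le> t" "t \<le> s"
  shows "(decay_weight lam s)\<^sup>2 \<le> (decay_weight lam t)\<^sup>2 * exp (-2 * s) / exp (-2 * t)"
proof -
  have sq: "(decay_weight lam x)\<^sup>2 = exp (- (2 - lam) * x - exp (2 * x))" for x
    unfolding decay_weight_def power2_eq_square by (simp flip: exp_add add: algebra_simps)
  have "(decay_weight lam t)\<^sup>2 * exp (-2 * s) / exp (-2 * t)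
      = exp (- (2 - lam) * t - exp (2 * t) - 2 * s + 2 * t)"
    unfolding sq by (simp add: algebra_simps flip: exp_add exp_diff)
  moreover have "(2 - lam) * (s - t) \<ge> 0" using assms by simp
  moreover note exp_double_diff_ge[OF assms(2,3)]
  ultimately show ?thesis
    unfolding sq by (simp add: algebra_simps)
qed

lemma continuity_induction_leftwards:
  fixes f g :: "real \<Rightarrow> real"
  assumes cont: "continuous_on {a..b} (\<lambda>s. g s - f s)"
    and right_end: "f b < g b"
    and step: "\<And>t. a \<le> t \<Longrightarrow> t < b \<Longrightarrow> (\<And>s. t \<le> s \<Longrightarrow> s \<le> b \<Longrightarrow> f s \<le> g s) \<Longrightarrow> f t < g t"
    and t: "a \<le> t" "t \<le> b"
  shows "f t < g t"
proof (rule ccontr)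
  assume bad: "\<not> f t < g t"
  define T where "T = {a..b} \<inter> (\<lambda>s. g s - f s) -` {..0}"
  have "T \<noteq> {}" using t bad unfolding T_def by auto
  moreover have "bdd_above T" unfolding T_def by (rule bdd_aboveI[of _ b]) auto
  moreover have "closed T"
    unfolding T_def by (rule continuous_closed_preimage[OF cont]) auto
  ultimately have "Sup T \<in> T" by (rule closed_contains_Sup)
  define ts where "ts = Sup T"
  have ts: "a \<le> ts" "ts \<le> b" "g ts \<le> f ts"
    using \<open>Sup T \<in> T\<close> unfolding ts_def T_def by auto
  have after: "f s < g s" if "ts < s" "s \<le> b" for s
  proof -
    have "s \<notin> T" using that cSup_upper[OF _ \<open>bdd_above T\<close>] unfolding ts_def by force
    then show ?thesis using that ts unfolding T_def by auto
  qed
  have "ts < b" using ts right_end by (cases "ts = b") auto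
  have "((\<lambda>s. g s - f s) \<longlongrightarrow> g ts - f ts) (at_right ts)"
  proof -
    have "continuous_on {ts..b} (\<lambda>s. g s - f s)"
      using ts by (intro continuous_on_subset[OF cont]) auto
    from continuous_on_Icc_at_rightD[OF this \<open>ts < b\<close>] show ?thesis .
  qed
  moreover have "eventually (\<lambda>s. 0 \<le> g s - f s) (at_right ts)"
    using \<open>ts < b\<close> after by (intro eventually_at_rightI[of ts b]) (auto simp: less_imp_le)
  ultimately have "0 \<le> g ts - f ts"
    by (rule tendsto_lowerbound) simp
  then have "f ts < g ts"
    using after by (intro step[OF ts(1) \<open>ts < b\<close>]) (force simp: le_less)
  then show False using ts(3) by simp
qed

lemma bounded_on_atLeast:
  fixes f :: "real \<Rightarrow> real"
  assumes "continuous_on {a..} f" and "eventually (\<lambda>x. \<bar>f x\<bar> \<le> B) at_top"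
  obtains M where "\<And>x. a \<le> x \<Longrightarrow> \<bar>f x\<bar> \<le> M"
proof -
  obtain X where X: "\<And>x. X \<le> x \<Longrightarrow> \<bar>f x\<bar> \<le> B"
    using assms(2) by (auto simp: eventually_at_top_linorder)
  have "continuous_on {a..max a X} f"
    using assms(1) by (rule continuous_on_subset) auto
  then obtain M where "\<And>x. x \<in> {a..max a X} \<Longrightarrow> norm (f x) \<le> M"
    using continuous_on_compact_bound[OF compact_Icc] by blast
  then show ?thesis
    using X by (intro that[of "max M B"]) (force simp: le_max_iff_disj)
qed

text \<open>With \<open>z = e^(2t)\<close> and \<open>E = e^(t/p - z/2)\<close>: the left-hand side is the product rule expansion of
  \<open>(E ((1/p - z) U + 2 z U'))'\<close>, i.e. of \<open>\<Upsilon>\<^sub>h''\<close>, and the Kummer equation turns it into \<open>(1/p^2 - \<lambda> z + z^2) \<Upsilon>\<^sub>h\<close>.\<close>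
lemma kummer_ode_transform:
  fixes z d2 d1 u E p lam w :: real
  assumes ode: "z * d2 + (1 + 1 / p - z) * d1 - ((p + 1) / (2 * p) - lam / 4) * u = 0"
    and "p > 0" and "w = z * z"
  shows "(1/p - z) * E * ((1/p - z) * u + 2 * z * d1)
           + (- (z * 2) * u + d1 * (z * 2) * (1/p - z) + (2 * (z * 2) * d1 + d2 * (z * 2) * (2 * z))) * E
         = (1/p\<^sup>2 - lam * z + w) * (E * u)"
proof -
  have d2: "d2 * (z * 2) * (2 * z) = 4 * z * (- (1 + 1/p - z) * d1 + ((p + 1) / (2 * p) - lam / 4) * u)"
    using ode by algebra
  show ?thesis
    unfolding d2 \<open>w = z * z\<close> using \<open>p > 0\<close> by (simp add: field_simps power2_eq_square)
qed

lemma Upsilon_h_linear_ode: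
  fixes U :: "real \<Rightarrow> real"
  assumes p: "p > 0" and U: "is_tricomi_U (kummer_alpha p lam) (kummer_beta p) U"
  shows "(Upsilon_h U p has_real_derivative deriv (Upsilon_h U p) t) (at t)"
    and "(deriv (Upsilon_h U p) has_real_derivative
            (1/p\<^sup>2 - lam * exp (2 * t) + exp (4 * t)) * Upsilon_h U p t) (at t)"
proof -
  from U obtain dU d2U where UD: "\<And>z. z > 0 \<Longrightarrow> (U has_real_derivative dU z) (at z)
      \<and> (dU has_real_derivative d2U z) (at z)
      \<and> z * d2U z + (kummer_beta p - z) * dU z - kummer_alpha p lam * U z = 0"
    unfolding is_tricomi_U_def by blast
  define E where "E t = exp (t/p) * exp (- exp (2 * t) / 2)" for t
  define dYh where "dYh t = E t * ((1/p - exp (2 * t)) * U (exp (2 * t)) + 2 * exp (2 * t) * dU (exp (2 * t)))" for t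
  have dE: "(E has_real_derivative (1/p - exp (2 * t)) * E t) (at t)" for t
    unfolding E_def[abs_def] using p by (auto intro!: derivative_eq_intros simp: field_simps)
  have dU1: "((\<lambda>t. U (exp (2 * t))) has_real_derivative dU (exp (2 * t)) * (exp (2 * t) * 2)) (at t)" for t
    using UD[of "exp (2 * t)"] by (auto intro!: DERIV_chain2[where f = U] derivative_eq_intros)
  have dU2: "((\<lambda>t. dU (exp (2 * t))) has_real_derivative d2U (exp (2 * t)) * (exp (2 * t) * 2)) (at t)" for t
    using UD[of "exp (2 * t)"] by (auto intro!: DERIV_chain2[where f = dU] derivative_eq_intros)
  have d1: "(Upsilon_h U p has_real_derivative dYh t) (at t)" for t
    unfolding Upsilon_h_def E_def[symmetric] dYh_def
    by (rule DERIV_cong[OF DERIV_mult[OF dE dU1]]) (simp add: algebra_simps)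
  then have deriv_eq: "deriv (Upsilon_h U p) = dYh"
    by (intro ext DERIV_imp_deriv)
  show "(Upsilon_h U p has_real_derivative deriv (Upsilon_h U p) t) (at t)"
    unfolding deriv_eq by (rule d1)
  have A: "((\<lambda>t. 1/p - exp (2 * t)) has_real_derivative - (exp (2 * t) * 2)) (at t)"
    and B: "((\<lambda>t. 2 * exp (2 * t)) has_real_derivative 2 * (exp (2 * t) * 2)) (at t)"
    by (auto intro!: derivative_eq_intros)
  have w: "exp (4 * t) = exp (2 * t) * exp (2 * t)" by (simp flip: exp_add)
  have ode: "exp (2 * t) * d2U (exp (2 * t)) + (1 + 1 / p - exp (2 * t)) * dU (exp (2 * t))
      - ((p + 1) / (2 * p) - lam / 4) * U (exp (2 * t)) = 0"
    using UD[of "exp (2 * t)"] by (simp add: kummer_alpha_def kummer_beta_def)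
  show "(deriv (Upsilon_h U p) has_real_derivative
            (1/p\<^sup>2 - lam * exp (2 * t) + exp (4 * t)) * Upsilon_h U p t) (at t)"
    unfolding deriv_eq dYh_def[abs_def] Upsilon_h_def E_def[symmetric]
    by (intro DERIV_cong[OF DERIV_mult[OF dE DERIV_add[OF DERIV_mult[OF A dU1] DERIV_mult[OF B dU2]]]])
       (rule kummer_ode_transform[OF ode p w])
qed

lemma tricomi_U_bound:
  assumes "is_tricomi_U al be U"
  obtains B where "\<And>z. 1 \<le> z \<Longrightarrow> \<bar>U z\<bar> \<le> B * z powr (- al)"
proof -
  from assms obtain dU where D: "\<And>z. z > 0 \<Longrightarrow> (U has_real_derivative dU z) (at z)"
    and O: "(\<lambda>z. U z * z powr al - 1) \<in> O[at_top](\<lambda>z. 1 / z)"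
    unfolding is_tricomi_U_def by blast
  from O obtain c where "c > 0" "eventually (\<lambda>z. norm (U z * z powr al - 1) \<le> c * norm (1 / z)) at_top"
    by (rule landau_o.bigE)
  then have "eventually (\<lambda>z. \<bar>U z * z powr al\<bar> \<le> 1 + c) at_top"
  proof (elim eventually_mono[OF eventually_conj[OF _ eventually_ge_at_top[of 1]]])
    fix z :: real
    assume z: "norm (U z * z powr al - 1) \<le> c * norm (1 / z) \<and> 1 \<le> z"
    then have "c * norm (1 / z) \<le> c" using \<open>c > 0\<close> by (simp add: field_simps)
    then show "\<bar>U z * z powr al\<bar> \<le> 1 + c" using z by auto
  qed
  moreover have "continuous_on {1..} (\<lambda>z. U z * z powr al)"
    using DERIV_isCont[OF D] by (intro continuous_intros continuous_at_imp_continuous_on) auto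
  ultimately obtain B where B: "\<And>z. 1 \<le> z \<Longrightarrow> \<bar>U z * z powr al\<bar> \<le> B"
    using bounded_on_atLeast by blast
  show ?thesis
  proof (rule that)
    fix z :: real
    assume z: "1 \<le> z"
    have "\<bar>U z\<bar> = \<bar>U z * z powr al\<bar> * z powr (- al)"
      using z by (simp add: abs_mult mult.assoc flip: powr_add)
    also have "\<dots> \<le> B * z powr (- al)" using B[OF z] by (intro mult_right_mono) auto
    finally show "\<bar>U z\<bar> \<le> B * z powr (- al)" .
  qed
qed

lemma Upsilon_h_bound_nonneg:
  assumes "is_tricomi_U (kummer_alpha p lam) be U" "p > 0"
  obtains A where "\<And>t. 0 \<le> t \<Longrightarrow> \<bar>Upsilon_h U p t\<bar> \<le> A * decay_weight lam t"
proof -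
  obtain B where B: "\<And>z. 1 \<le> z \<Longrightarrow> \<bar>U z\<bar> \<le> B * z powr (- kummer_alpha p lam)"
    using tricomi_U_bound[OF assms(1)] by blast
  show ?thesis
  proof (rule that)
    fix t :: real
    assume t: "0 \<le> t"
    have "\<bar>U (exp (2 * t))\<bar> \<le> B * exp (- 2 * t * kummer_alpha p lam)"
      using B[of "exp (2 * t)"] t by (simp add: powr_def algebra_simps)
    then have "\<bar>Upsilon_h U p t\<bar> \<le> exp (t/p) * exp (- exp (2 * t) / 2) * (B * exp (- 2 * t * kummer_alpha p lam))"
      unfolding Upsilon_h_def abs_mult abs_exp_cancel by (intro mult_left_mono) auto
    also have "\<dots> = B * exp (t/p + (- 2 * t * kummer_alpha p lam) + (- exp (2 * t) / 2))"
      by (simp only: exp_add ac_simps)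
    also have "t/p + (- 2 * t * kummer_alpha p lam) = - (1 - lam / 2) * t"
      unfolding kummer_alpha_def using assms(2) by (simp add: field_simps)
    finally show "\<bar>Upsilon_h U p t\<bar> \<le> B * decay_weight lam t"
      unfolding decay_weight_def by simp
  qed
qed

text \<open>The growth prescribed for \<open>\<Upsilon>\<^sub>g\<close> at infinity is \<open>e^(-2t) / (2 w(t))\<close>, \<open>w = decay_weight \<lambda>\<close>.\<close>
lemma Upsilon_g_bound_nonneg:
  assumes "is_Upsilon_g p lam Yh Yg"
  obtains A where "\<And>t. 0 \<le> t \<Longrightarrow> \<bar>Yg t\<bar> \<le> A * exp (-2 * t) / decay_weight lam t"
proof -
  from assms obtain dYg where D: "\<And>t. (Yg has_real_derivative dYg t) (at t)"
    and lim: "((\<lambda>t. Yg t / ((1/2) * exp (- (1 + lam / 2) * t) * exp (exp (2 * t) / 2))) \<longlongrightarrow> 1) at_top"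
    unfolding is_Upsilon_g_def by blast
  have growth: "(1/2) * exp (- (1 + lam / 2) * t) * exp (exp (2 * t) / 2)
      = 1 / (2 * (decay_weight lam t * exp (2 * t)))" for t
    unfolding decay_weight_def by (simp add: exp_minus exp_diff field_simps flip: exp_add)
  have "eventually (\<lambda>t. -2 < Yg t * (2 * (decay_weight lam t * exp (2 * t)))
      \<and> Yg t * (2 * (decay_weight lam t * exp (2 * t))) < 2) at_top"
    using order_tendstoD(1)[OF lim, of "-2"] order_tendstoD(2)[OF lim, of 2]
    unfolding growth by (auto intro: eventually_conj)
  then have "eventually (\<lambda>t. \<bar>Yg t * decay_weight lam t * exp (2 * t)\<bar> \<le> 1) at_top"
    by eventually_elim (auto simp: abs_less_iff mult.assoc intro: less_imp_le)
  moreover have "continuous_on {0..} (\<lambda>t. Yg t * decay_weight lam t * exp (2 * t))"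
    using DERIV_isCont[OF D] unfolding decay_weight_def
    by (intro continuous_intros continuous_at_imp_continuous_on) auto
  ultimately obtain A where A: "\<And>t. 0 \<le> t \<Longrightarrow> \<bar>Yg t * decay_weight lam t * exp (2 * t)\<bar> \<le> A"
    using bounded_on_atLeast by blast
  show ?thesis
  proof (rule that)
    fix t :: real
    assume "0 \<le> t"
    then have "\<bar>Yg t\<bar> * (decay_weight lam t * exp (2 * t)) \<le> A"
      using A abs_of_pos[OF decay_weight_pos] by (simp add: abs_mult mult.assoc)
    then show "\<bar>Yg t\<bar> \<le> A * exp (-2 * t) / decay_weight lam t"
      using decay_weight_pos[of lam t] by (simp add: exp_minus field_simps)
  qed
qed

text \<open>\<open>eps > 0\<close> keeps the energy positive, hence differentiable.\<close>
definition energy :: "real \<Rightarrow> real \<Rightarrow> real \<Rightarrow> real \<Rightarrow> real" where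
  "energy p eps u v = sqrt (p\<^sup>2 * v\<^sup>2 + u\<^sup>2 + eps)"

lemma energy_pos: "eps > 0 \<Longrightarrow> energy p eps u v > 0"
  unfolding energy_def by (simp add: add_nonneg_pos)

lemma abs_le_energy: "eps \<ge> 0 \<Longrightarrow> \<bar>u\<bar> \<le> energy p eps u v"
  unfolding energy_def by (rule real_le_rsqrt) (simp add: power2_eq_square)

lemma abs_deriv_le_energy:
  assumes "eps \<ge> 0" "p \<ge> 0"
  shows "p * \<bar>v\<bar> \<le> energy p eps u v"
  unfolding energy_def
proof (rule real_le_rsqrt)
  have "(p * \<bar>v\<bar>)\<^sup>2 = p\<^sup>2 * v\<^sup>2" by (simp add: power_mult_distrib)
  then show "(p * \<bar>v\<bar>)\<^sup>2 \<le> p\<^sup>2 * v\<^sup>2 + u\<^sup>2 + eps" using assms by simp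
qed

lemma energy_le:
  assumes "eps \<ge> 0" "p \<ge> 0"
  shows "energy p eps u v \<le> p * \<bar>v\<bar> + \<bar>u\<bar> + sqrt eps"
proof -
  have "p\<^sup>2 * v\<^sup>2 + u\<^sup>2 + eps \<le> (p * \<bar>v\<bar> + \<bar>u\<bar> + sqrt eps)\<^sup>2"
    using assms by (simp add: power2_eq_square algebra_simps)
  then have "energy p eps u v \<le> sqrt ((p * \<bar>v\<bar> + \<bar>u\<bar> + sqrt eps)\<^sup>2)"
    unfolding energy_def by (rule real_sqrt_le_mono)
  also have "\<dots> = p * \<bar>v\<bar> + \<bar>u\<bar> + sqrt eps" using assms by simp
  finally show ?thesis .
qed

lemma energy_has_derivative:
  assumes "eps > 0"
    and "(x has_real_derivative dx s) (at s)" and "(dx has_real_derivative ddx) (at s)"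
  shows "((\<lambda>s. energy p eps (x s) (dx s)) has_real_derivative
           (p\<^sup>2 * dx s * ddx + x s * dx s) / energy p eps (x s) (dx s)) (at s)"
proof -
  have G: "p\<^sup>2 * (dx s)\<^sup>2 + (x s)\<^sup>2 + eps > 0"
    using assms(1) by (simp add: add_nonneg_pos)
  have "((\<lambda>s. p\<^sup>2 * (dx s)\<^sup>2 + (x s)\<^sup>2 + eps) has_real_derivative
      2 * (p\<^sup>2 * dx s * ddx + x s * dx s)) (at s)"
    using assms(2,3) by (auto intro!: derivative_eq_intros simp: algebra_simps)
  from DERIV_chain2[OF DERIV_real_sqrt[OF G] this]
  have D: "((\<lambda>s. energy p eps (x s) (dx s)) has_real_derivative
      inverse (sqrt (p\<^sup>2 * (dx s)\<^sup>2 + (x s)\<^sup>2 + eps)) / 2 * (2 * (p\<^sup>2 * dx s * ddx + x s * dx s))) (at s)"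
    unfolding energy_def[abs_def] .
  have "inverse (sqrt g) / 2 * (2 * n) = n / sqrt g" for g n :: real
    by (simp add: field_simps)
  with D show ?thesis
    unfolding energy_def by (simp only:)
qed

text \<open>Along \<open>x'' = x/p^2 + r\<close> the energy decreases at rate at most \<open>1/p\<close>, up to the forcing \<open>r\<close>.\<close>
lemma energy_deriv_ge:
  fixes u v r p eps :: real
  assumes p: "p > 0" and eps: "eps > 0"
  shows "- energy p eps u v / p - p * \<bar>r\<bar> \<le> (p\<^sup>2 * v * (u / p\<^sup>2 + r) + u * v) / energy p eps u v"
proof -
  define F where "F = energy p eps u v"
  have F: "F > 0" unfolding F_def using eps by (rule energy_pos)
  have FF: "F * F = p\<^sup>2 * v\<^sup>2 + u\<^sup>2 + eps"
    unfolding F_def energy_def using eps by (simp add: add_nonneg_nonneg)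
  have "- 2 * p * (u * v) \<le> u\<^sup>2 + p\<^sup>2 * v\<^sup>2"
    using zero_le_power2[of "u + p * v"] by (simp add: power2_eq_square algebra_simps)
  then have uv: "- (F * F) / p \<le> 2 * u * v" using p eps unfolding FF by (simp add: field_simps)
  have "\<bar>p\<^sup>2 * v * r\<bar> = p * \<bar>r\<bar> * (p * \<bar>v\<bar>)" using p by (simp add: abs_mult power2_eq_square)
  also have "\<dots> \<le> p * \<bar>r\<bar> * F"
    unfolding F_def using p eps by (intro mult_left_mono abs_deriv_le_energy) auto
  finally have "(- F / p - p * \<bar>r\<bar>) * F \<le> 2 * u * v + p\<^sup>2 * v * r"
    using uv by (simp add: algebra_simps)
  then have "- F / p - p * \<bar>r\<bar> \<le> (2 * u * v + p\<^sup>2 * v * r) / F"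
    using F by (simp add: pos_le_divide_eq)
  moreover have "p\<^sup>2 * v * (u / p\<^sup>2 + r) + u * v = 2 * u * v + p\<^sup>2 * v * r"
    using p by (simp add: field_simps)
  ultimately show ?thesis unfolding F_def by (simp only:)
qed

text \<open>Gronwall-type estimate for \<open>x'' = x/p^2 + r\<close> on \<open>t \<le> 0\<close>: the factor \<open>exp(p k e^(2s)/2)\<close> absorbs
  the linear part of \<open>r\<close>, and \<open>e^(-t/p)\<close> is the growth of the free solutions towards \<open>-\<infinity>\<close>.\<close>
lemma energy_growth_bound:
  fixes x dx r :: "real \<Rightarrow> real" and p k Q eps t :: real
  assumes p: "p > 0" and k: "k \<ge> 0" and Q: "Q \<ge> 0" and eps: "eps > 0" and t: "t \<le> 0"
    and dx: "\<And>s. (x has_real_derivative dx s) (at s)"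
    and ddx: "\<And>s. (dx has_real_derivative (x s / p\<^sup>2 + r s)) (at s)"
    and r: "\<And>s. t < s \<Longrightarrow> s < 0 \<Longrightarrow> \<bar>r s\<bar> \<le> k * exp (2 * s) * \<bar>x s\<bar> + Q * exp (-2 * s) * exp (- s / p)"
  shows "energy p eps (x t) (dx t)
           \<le> exp (p * k / 2) * exp (- t / p) * (energy p eps (x 0) (dx 0) + p * Q * exp (-2 * t) / 2)"
proof -
  define F where "F s = energy p eps (x s) (dx s)" for s
  define F' where "F' s = (p\<^sup>2 * dx s * (x s / p\<^sup>2 + r s) + x s * dx s) / F s" for s
  define m where "m s = exp (p * k * exp (2 * s) / 2)" for s
  define m0 where "m0 = exp (p * k / 2)"
  define Z where "Z s = F s * exp (s / p) * m s - p * Q * m0 * exp (-2 * s) / 2" for s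
  define Z' where "Z' s = (F' s + F s / p + p * k * exp (2 * s) * F s) * exp (s / p) * m s
      + p * Q * m0 * exp (-2 * s)" for s
  have dF: "(F has_real_derivative F' s) (at s)" for s
    unfolding F_def[abs_def] F'_def F_def by (rule energy_has_derivative[OF eps dx ddx])
  have dm: "(m has_real_derivative m s * (p * k * exp (2 * s))) (at s)" for s
    unfolding m_def[abs_def] by (auto intro!: derivative_eq_intros)
  have dZ: "(Z has_real_derivative Z' s) (at s)" for s
    unfolding Z_def[abs_def] Z'_def using p
    by (auto intro!: derivative_eq_intros dF dm simp: algebra_simps)
  have "Z t \<le> Z 0"
  proof (rule DERIV_nonneg_imp_increasing_open[OF t])
    fix s
    assume s: "t < s" "s < 0"
    have "\<bar>r s\<bar> \<le> k * exp (2 * s) * F s + Q * exp (-2 * s) * exp (- s / p)"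
      using r[OF s] mult_left_mono[OF abs_le_energy[of eps "x s" p "dx s"], of "k * exp (2 * s)"] eps k
      unfolding F_def by auto
    then have "p * \<bar>r s\<bar> \<le> p * (k * exp (2 * s) * F s + Q * exp (-2 * s) * exp (- s / p))"
      by (rule mult_left_mono) (use p in simp)
    then have "p * \<bar>r s\<bar> \<le> p * k * exp (2 * s) * F s + p * Q * exp (-2 * s) * exp (- s / p)"
      by (simp only: distrib_left mult.assoc)
    then have "F' s + F s / p + p * k * exp (2 * s) * F s \<ge> - p * Q * exp (-2 * s) * exp (- s / p)"
      using energy_deriv_ge[OF p eps, of "x s" "dx s" "r s"] unfolding F'_def F_def by linarith
    then have "Z' s \<ge> - p * Q * exp (-2 * s) * exp (- s / p) * exp (s / p) * m s + p * Q * m0 * exp (-2 * s)"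
      unfolding Z'_def by (intro add_right_mono mult_right_mono) (auto simp: m_def)
    also have "- p * Q * exp (-2 * s) * exp (- s / p) * exp (s / p) * m s = - p * Q * exp (-2 * s) * m s"
      by (simp add: mult_exp_exp)
    finally have "Z' s \<ge> p * Q * exp (-2 * s) * (m0 - m s)"
      by (simp add: algebra_simps)
    moreover have "m s \<le> m0"
      unfolding m_def m0_def using s p k by (simp add: mult_left_le)
    moreover have "p * Q * exp (-2 * s) * (m0 - m s) \<ge> 0" using \<open>m s \<le> m0\<close> p Q by simp
    ultimately show "\<exists>y. (Z has_real_derivative y) (at s) \<and> 0 \<le> y" using dZ by force
  next
    show "continuous_on {t..0} Z"
      using dZ by (meson DERIV_isCont continuous_at_imp_continuous_on)
  qed
  then have "F t * exp (t / p) * m t - p * Q * m0 * exp (-2 * t) / 2 \<le> F 0 * m0 - p * Q * m0 / 2"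
    unfolding Z_def by (simp add: m_def m0_def)
  moreover have "p * Q * m0 \<ge> 0" using p Q unfolding m0_def by simp
  ultimately have "F t * exp (t / p) * m t \<le> F 0 * m0 + p * Q * m0 * exp (-2 * t) / 2"
    by linarith
  moreover have "F t * exp (t / p) \<le> F t * exp (t / p) * m t"
    using energy_pos[OF eps] p k unfolding F_def m_def by simp
  ultimately have "F t * exp (t / p) \<le> m0 * (F 0 + p * Q * exp (-2 * t) / 2)"
    by (simp add: algebra_simps)
  then have "F t \<le> m0 * (F 0 + p * Q * exp (-2 * t) / 2) * exp (- t / p)"
    by (simp add: exp_minus field_simps)
  then show ?thesis unfolding F_def m0_def by (simp add: ac_simps)
qed

lemma abs_exp4_sub_exp2_le:
  fixes s lam :: real
  assumes "s \<le> 0"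
  shows "\<bar>exp (4 * s) - lam * exp (2 * s)\<bar> \<le> (1 + \<bar>lam\<bar>) * exp (2 * s)"
proof -
  have "exp (4 * s) = exp (2 * s) * exp (2 * s)" by (simp flip: exp_add)
  also have "\<dots> \<le> exp (2 * s)" using assms by (simp add: mult_le_cancel_left1)
  finally have "\<bar>exp (4 * s)\<bar> \<le> exp (2 * s)" by simp
  moreover have "\<bar>lam * exp (2 * s)\<bar> = \<bar>lam\<bar> * exp (2 * s)" by (simp add: abs_mult)
  moreover have "(1 + \<bar>lam\<bar>) * exp (2 * s) = exp (2 * s) + \<bar>lam\<bar> * exp (2 * s)"
    by (simp add: algebra_simps)
  moreover note abs_triangle_ineq4[of "exp (4 * s)" "lam * exp (2 * s)"]
  ultimately show ?thesis by linarith
qed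

lemma linear_solution_bound_nonpos:
  fixes Y dY :: "real \<Rightarrow> real" and p lam :: real
  assumes p: "p > 0"
    and d1: "\<And>s. (Y has_real_derivative dY s) (at s)"
    and d2: "\<And>s. (dY has_real_derivative (1/p\<^sup>2 - lam * exp (2 * s) + exp (4 * s)) * Y s) (at s)"
  obtains A where "\<And>t. t \<le> 0 \<Longrightarrow> \<bar>Y t\<bar> \<le> A * exp (- t / p)"
proof -
  define A where "A = exp (p * (1 + \<bar>lam\<bar>) / 2) * energy p 1 (Y 0) (dY 0)"
  show ?thesis
  proof (rule that[of A])
    fix t :: real
    assume t: "t \<le> 0"
    have "energy p 1 (Y t) (dY t)
        \<le> exp (p * (1 + \<bar>lam\<bar>) / 2) * exp (- t / p) * (energy p 1 (Y 0) (dY 0) + p * 0 * exp (-2 * t) / 2)"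
    proof (rule energy_growth_bound[OF p _ _ _ t d1, where r = "\<lambda>s. (exp (4 * s) - lam * exp (2 * s)) * Y s"])
      show "(dY has_real_derivative (Y s / p\<^sup>2 + (exp (4 * s) - lam * exp (2 * s)) * Y s)) (at s)" for s
        by (rule DERIV_cong[OF d2]) (simp add: algebra_simps)
      fix s
      assume "t < s" "s < 0"
      then show "\<bar>(exp (4 * s) - lam * exp (2 * s)) * Y s\<bar>
          \<le> (1 + \<bar>lam\<bar>) * exp (2 * s) * \<bar>Y s\<bar> + 0 * exp (-2 * s) * exp (- s / p)"
        unfolding abs_mult by (simp add: mult_right_mono abs_exp4_sub_exp2_le)
    qed auto
    moreover have "\<bar>Y t\<bar> \<le> energy p 1 (Y t) (dY t)" by (rule abs_le_energy) simp
    ultimately show "\<bar>Y t\<bar> \<le> A * exp (- t / p)"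
      unfolding A_def by (simp add: algebra_simps)
  qed
qed

lemma abs_nonlinearity:
  fixes y p :: real
  assumes "p \<ge> 0"
  shows "\<bar>\<bar>y\<bar> powr (2 * p) * y\<bar> = \<bar>y\<bar> powr (2 * p + 1)"
  using assms by (cases "y = 0") (simp_all add: abs_mult powr_add)

lemma green_kernel_integrand_bound:
  fixes hs ht gs gt psi ws wt es et A M p :: real
  assumes ws: "ws > 0" and wt: "wt > 0" and es: "es > 0" and et: "et > 0"
    and A: "A \<ge> 0" and M: "M \<ge> 0" and p: "p \<ge> 0"
    and hs: "\<bar>hs\<bar> \<le> A * ws" and ht: "\<bar>ht\<bar> \<le> A * wt"
    and gs: "\<bar>gs\<bar> \<le> A * es / ws" and gt: "\<bar>gt\<bar> \<le> A * et / wt"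
    and psi: "\<bar>psi\<bar> \<le> M * ws"
    and w2: "ws\<^sup>2 \<le> wt\<^sup>2 * es / et" and wp: "ws powr (2 * p) \<le> wt powr (2 * p)"
  shows "\<bar>(hs * gt - ht * gs) * (\<bar>psi\<bar> powr (2 * p) * psi)\<bar>
           \<le> 2 * A\<^sup>2 * M powr (2 * p) * M * wt * wt powr (2 * p) * es"
proof -
  have N: "\<bar>\<bar>psi\<bar> powr (2 * p) * psi\<bar> \<le> (M powr (2 * p) * ws powr (2 * p)) * (M * ws)"
  proof -
    have "\<bar>\<bar>psi\<bar> powr (2 * p) * psi\<bar> = \<bar>psi\<bar> powr (2 * p) * \<bar>psi\<bar>" by (simp add: abs_mult)
    also have "\<dots> \<le> (M * ws) powr (2 * p) * (M * ws)"
      by (intro mult_mono powr_mono2 psi) (use ws M p in auto)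
    also have "(M * ws) powr (2 * p) = M powr (2 * p) * ws powr (2 * p)" using ws M by (simp add: powr_mult)
    finally show ?thesis .
  qed
  have "\<bar>hs * gt - ht * gs\<bar> \<le> \<bar>hs\<bar> * \<bar>gt\<bar> + \<bar>ht\<bar> * \<bar>gs\<bar>"
    by (simp add: abs_mult order_trans[OF abs_triangle_ineq4])
  also have "\<dots> \<le> (A * ws) * (A * et / wt) + (A * wt) * (A * es / ws)"
    by (intro add_mono mult_mono hs gt ht gs) (use A ws wt et es in auto)
  finally have K: "\<bar>hs * gt - ht * gs\<bar> \<le> (A * ws) * (A * et / wt) + (A * wt) * (A * es / ws)" .
  have "\<bar>(hs * gt - ht * gs) * (\<bar>psi\<bar> powr (2 * p) * psi)\<bar>
        \<le> ((A * ws) * (A * et / wt) + (A * wt) * (A * es / ws)) * ((M powr (2 * p) * ws powr (2 * p)) * (M * ws))"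
    unfolding abs_mult[of "hs * gt - ht * gs"] by (intro mult_mono K N) (use A ws wt et es M in auto)
  also have "\<dots> = A\<^sup>2 * M powr (2 * p) * M * ws powr (2 * p) * (ws\<^sup>2 * et / wt + wt * es)"
    using ws wt by (simp add: field_simps power2_eq_square)
  also have "\<dots> \<le> A\<^sup>2 * M powr (2 * p) * M * wt powr (2 * p) * (wt * es + wt * es)"
  proof (intro mult_mono add_mono wp)
    have "ws\<^sup>2 * et / wt \<le> (wt\<^sup>2 * es / et) * et / wt"
      by (intro divide_right_mono mult_right_mono w2) (use et wt in auto)
    also have "\<dots> = wt * es" using et wt by (simp add: field_simps power2_eq_square)
    finally show "ws\<^sup>2 * et / wt \<le> wt * es" .
  qed (use A M wt es ws et in auto)
  also have "\<dots> = 2 * A\<^sup>2 * M powr (2 * p) * M * wt * wt powr (2 * p) * es" by (simp add: algebra_simps)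
  finally show ?thesis .
qed

lemma integral_remainder_bound:
  fixes Yh Yg Psi :: "real \<Rightarrow> real" and c p A M t lam :: real
  assumes p: "p \<ge> 0" and A: "A \<ge> 0" and M: "M \<ge> 0" and t: "0 \<le> t" and lam: "lam \<le> 2"
    and int: "((\<lambda>s. (Yh s * Yg t - Yh t * Yg s) * (\<bar>Psi s\<bar> powr (2 * p) * Psi s))
                has_integral (Psi t - c * Yh t)) {t..}"
    and Yh: "\<And>s. 0 \<le> s \<Longrightarrow> \<bar>Yh s\<bar> \<le> A * decay_weight lam s"
    and Yg: "\<And>s. 0 \<le> s \<Longrightarrow> \<bar>Yg s\<bar> \<le> A * exp (-2 * s) / decay_weight lam s"
    and Psi: "\<And>s. t \<le> s \<Longrightarrow> \<bar>Psi s\<bar> \<le> M * decay_weight lam s"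
  shows "\<bar>Psi t - c * Yh t\<bar> \<le> A\<^sup>2 * M powr (2 * p + 1) * decay_weight lam t * exp (-2 * t)"
proof -
  define w where "w = decay_weight lam t"
  define K where "K = 2 * A\<^sup>2 * M powr (2 * p) * M * w * w powr (2 * p)"
  have g: "((\<lambda>s. K * exp (-2 * s)) has_integral K * (exp (-2 * t) / 2)) {t..}"
    using has_integral_exp_minus_to_infinity[of 2 t] by (intro has_integral_mult_right) simp
  have "norm (integral {t..} (\<lambda>s. (Yh s * Yg t - Yh t * Yg s) * (\<bar>Psi s\<bar> powr (2 * p) * Psi s)))
      \<le> integral {t..} (\<lambda>s. K * exp (-2 * s))"
  proof (rule integral_norm_bound_integral)
    show "(\<lambda>s. K * exp (-2 * s)) integrable_on {t..}" using g by blast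
    fix s
    assume "s \<in> {t..}"
    then have s: "t \<le> s" by simp
    show "norm ((Yh s * Yg t - Yh t * Yg s) * (\<bar>Psi s\<bar> powr (2 * p) * Psi s)) \<le> K * exp (-2 * s)"
      unfolding K_def w_def real_norm_def
      by (rule green_kernel_integrand_bound[OF decay_weight_pos decay_weight_pos exp_gt_zero exp_gt_zero
            A M p Yh Yh Yg Yg Psi decay_weight_sq_le[OF lam t s]])
         (use s t decay_weight_antimono[OF lam t s] p in \<open>auto intro: powr_mono2 less_imp_le[OF decay_weight_pos]\<close>)
  qed (use int in blast)
  then have "\<bar>Psi t - c * Yh t\<bar> \<le> integral {t..} (\<lambda>s. K * exp (-2 * s))"
    using integral_unique[OF int] by simp
  also have "\<dots> = K * (exp (-2 * t) / 2)" using g by (rule integral_unique)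
  also have "\<dots> = A\<^sup>2 * M powr (2 * p) * M * w * w powr (2 * p) * exp (-2 * t)"
    unfolding K_def by simp
  also have "\<dots> \<le> A\<^sup>2 * M powr (2 * p) * M * w * 1 * exp (-2 * t)"
    using decay_weight_le_one[OF lam t] decay_weight_pos[of lam t] A M p unfolding w_def
    by (intro mult_right_mono mult_left_mono powr_le1) auto
  finally show ?thesis
    using M p unfolding w_def by (simp add: powr_add)
qed

lemma remainder_eventually_small:
  fixes Yh Yg Psi :: "real \<Rightarrow> real" and c p A M K lam :: real
  assumes p: "p \<ge> 0" and A: "A \<ge> 0" and M: "M \<ge> 0" and K: "K > 0" and lam: "lam \<le> 2"
    and int: "\<And>t. 0 \<le> t \<Longrightarrow> ((\<lambda>s. (Yh s * Yg t - Yh t * Yg s) * (\<bar>Psi s\<bar> powr (2 * p) * Psi s))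
                has_integral (Psi t - c * Yh t)) {t..}"
    and Yh: "\<And>s. 0 \<le> s \<Longrightarrow> \<bar>Yh s\<bar> \<le> A * decay_weight lam s"
    and Yg: "\<And>s. 0 \<le> s \<Longrightarrow> \<bar>Yg s\<bar> \<le> A * exp (-2 * s) / decay_weight lam s"
    and Psi: "\<And>s. 0 \<le> s \<Longrightarrow> \<bar>Psi s\<bar> \<le> M * decay_weight lam s"
  obtains R where "R \<ge> 0" "\<And>t. R < t \<Longrightarrow> \<bar>Psi t - c * Yh t\<bar> < K * decay_weight lam t"
proof
  define X where "X = A\<^sup>2 * M powr (2 * p + 1)"
  show "ln (X / K + 1) / 2 \<ge> 0" unfolding X_def using K by simp
  fix t
  assume "ln (X / K + 1) / 2 < t"
  then have "X / K + 1 < exp (2 * t)"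
    unfolding X_def using K by (simp add: ln_less_cancel_iff[symmetric] add_nonneg_pos)
  then have XK: "X * exp (-2 * t) < K"
    using K by (simp add: exp_minus field_simps)
  have "0 \<le> t" using \<open>ln (X / K + 1) / 2 < t\<close> \<open>ln (X / K + 1) / 2 \<ge> 0\<close> by linarith
  then have "\<bar>Psi t - c * Yh t\<bar> \<le> X * decay_weight lam t * exp (-2 * t)"
    unfolding X_def by (intro integral_remainder_bound[OF p A M _ lam int Yh Yg Psi]) auto
  also have "\<dots> < K * decay_weight lam t"
    using XK decay_weight_pos[of lam t] by (simp add: mult.commute mult.left_commute)
  finally show "\<bar>Psi t - c * Yh t\<bar> < K * decay_weight lam t" .
qed

lemma abs_le_of_remainder_bound:
  fixes y h c A B w :: real
  assumes "\<bar>h\<bar> \<le> A * w" and "\<bar>y - c * h\<bar> \<le> B * w"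
  shows "\<bar>y\<bar> \<le> (A * \<bar>c\<bar> + B) * w"
proof -
  have "\<bar>y\<bar> \<le> \<bar>c\<bar> * \<bar>h\<bar> + \<bar>y - c * h\<bar>" by (simp add: abs_mult[symmetric])
  also have "\<dots> \<le> \<bar>c\<bar> * (A * w) + B * w"
    using assms by (intro add_mono mult_left_mono) auto
  finally show ?thesis by (simp add: algebra_simps)
qed

text \<open>The gain of the continuity argument on \<open>t \<ge> 0\<close>: the bound \<open>A |c| w\<close> on the remainder comes
  back with the factor \<open>A (2A)^(2p+1) |c|^(2p)\<close>, which is small for small \<open>c\<close>.\<close>
lemma remainder_bound_improves:
  fixes Yh Yg Psi :: "real \<Rightarrow> real" and c p A lam t :: real
  assumes p: "p > 0" and lam: "lam \<le> 2" and A: "A > 0" and t: "0 \<le> t"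
    and int: "((\<lambda>s. (Yh s * Yg t - Yh t * Yg s) * (\<bar>Psi s\<bar> powr (2 * p) * Psi s))
                has_integral (Psi t - c * Yh t)) {t..}"
    and Yh: "\<And>s. 0 \<le> s \<Longrightarrow> \<bar>Yh s\<bar> \<le> A * decay_weight lam s"
    and Yg: "\<And>s. 0 \<le> s \<Longrightarrow> \<bar>Yg s\<bar> \<le> A * exp (-2 * s) / decay_weight lam s"
    and remainder: "\<And>s. t \<le> s \<Longrightarrow> \<bar>Psi s - c * Yh s\<bar> \<le> A * \<bar>c\<bar> * decay_weight lam s"
  shows "\<bar>Psi t - c * Yh t\<bar> \<le> A\<^sup>2 * (2 * A) powr (2 * p + 1) * \<bar>c\<bar> powr (2 * p + 1) * decay_weight lam t"
proof -
  have "\<bar>Psi s\<bar> \<le> (2 * A * \<bar>c\<bar>) * decay_weight lam s" if "t \<le> s" for s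
    using abs_le_of_remainder_bound[OF Yh remainder[OF that]] that t by (simp add: algebra_simps)
  then have "\<bar>Psi t - c * Yh t\<bar> \<le> A\<^sup>2 * (2 * A * \<bar>c\<bar>) powr (2 * p + 1) * decay_weight lam t * exp (-2 * t)"
    using A p by (intro integral_remainder_bound[OF _ _ _ t lam int Yh Yg]) auto
  also have "\<dots> \<le> A\<^sup>2 * (2 * A * \<bar>c\<bar>) powr (2 * p + 1) * decay_weight lam t * 1"
    using t decay_weight_pos[of lam t] by (intro mult_left_mono) auto
  finally show ?thesis using A by (simp add: powr_mult mult.assoc)
qed

lemma remainder_bound_nonneg:
  fixes Yh Yg Psi :: "real \<Rightarrow> real" and c p A lam C :: real
  assumes p: "p > 0" and lam: "lam \<le> 2" and A: "A > 0"
    and int: "\<And>t. 0 \<le> t \<Longrightarrow> ((\<lambda>s. (Yh s * Yg t - Yh t * Yg s) * (\<bar>Psi s\<bar> powr (2 * p) * Psi s))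
                has_integral (Psi t - c * Yh t)) {t..}"
    and Yh: "\<And>s. 0 \<le> s \<Longrightarrow> \<bar>Yh s\<bar> \<le> A * decay_weight lam s"
    and Yg: "\<And>s. 0 \<le> s \<Longrightarrow> \<bar>Yg s\<bar> \<le> A * exp (-2 * s) / decay_weight lam s"
    and cont: "continuous_on {0..} (\<lambda>s. Psi s - c * Yh s)"
    and decay: "\<And>t. 0 \<le> t \<Longrightarrow> \<bar>Psi t - c * Yh t\<bar> \<le> C * \<bar>c\<bar> powr (2 * p + 1) * decay_weight lam t"
  defines "K \<equiv> 2 * A\<^sup>2 * (2 * A) powr (2 * p + 1)"
  assumes small: "K * \<bar>c\<bar> powr (2 * p) \<le> A" and t: "0 \<le> t"
  shows "\<bar>Psi t - c * Yh t\<bar> \<le> K * \<bar>c\<bar> powr (2 * p + 1) * decay_weight lam t"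
proof (cases "c = 0")
  case True
  then show ?thesis using decay[OF t] p by simp
next
  case False
  define eta where "eta s = Psi s - c * Yh s" for s
  define K' where "K' = K * \<bar>c\<bar> powr (2 * p + 1)"
  have "K' > 0" unfolding K'_def K_def using A False by simp
  have "K' = (K * \<bar>c\<bar> powr (2 * p)) * \<bar>c\<bar>"
    unfolding K'_def using False by (simp add: powr_add mult.assoc)
  also have "\<dots> \<le> A * \<bar>c\<bar>" using small by (intro mult_right_mono) auto
  finally have K'_le: "K' \<le> A * \<bar>c\<bar>" .
  have Psi_bound: "\<bar>Psi s\<bar> \<le> (A * \<bar>c\<bar> + \<bar>C\<bar> * \<bar>c\<bar> powr (2 * p + 1)) * decay_weight lam s"
    if "0 \<le> s" for s
  proof (rule abs_le_of_remainder_bound[OF Yh[OF that]])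
    have "C * \<bar>c\<bar> powr (2 * p + 1) * decay_weight lam s \<le> \<bar>C\<bar> * \<bar>c\<bar> powr (2 * p + 1) * decay_weight lam s"
      using decay_weight_pos[of lam s] by (intro mult_right_mono) auto
    then show "\<bar>Psi s - c * Yh s\<bar> \<le> \<bar>C\<bar> * \<bar>c\<bar> powr (2 * p + 1) * decay_weight lam s"
      using decay[OF that] by linarith
  qed
  obtain R where "R \<ge> 0" and far: "\<And>s. R < s \<Longrightarrow> \<bar>eta s\<bar> < K' * decay_weight lam s"
    unfolding eta_def
    by (rule remainder_eventually_small[OF _ _ _ \<open>K' > 0\<close> lam int Yh Yg Psi_bound]) (use p A in auto)
  have "\<bar>eta t\<bar> < K' * decay_weight lam t" if "t \<le> R + 1"
  proof (rule continuity_induction_leftwards[where a = 0 and b = "R + 1"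
        and f = "\<lambda>s. \<bar>eta s\<bar>" and g = "\<lambda>s. K' * decay_weight lam s"])
    have "continuous_on {0..R + 1} eta"
      unfolding eta_def[abs_def] by (rule continuous_on_subset[OF cont]) auto
    then show "continuous_on {0..R + 1} (\<lambda>s. K' * decay_weight lam s - \<bar>eta s\<bar>)"
      unfolding decay_weight_def by (intro continuous_intros) auto
    show "\<bar>eta (R + 1)\<bar> < K' * decay_weight lam (R + 1)" by (rule far) simp
    fix t0
    assume t0: "0 \<le> t0" and hyp: "\<And>s. t0 \<le> s \<Longrightarrow> s \<le> R + 1 \<Longrightarrow> \<bar>eta s\<bar> \<le> K' * decay_weight lam s"
    have "\<bar>eta s\<bar> \<le> A * \<bar>c\<bar> * decay_weight lam s" if "t0 \<le> s" for s
    proof -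
      have "\<bar>eta s\<bar> \<le> K' * decay_weight lam s"
        using hyp[OF that] far[of s] by (cases "s \<le> R + 1") auto
      also have "\<dots> \<le> A * \<bar>c\<bar> * decay_weight lam s"
        using K'_le decay_weight_pos[of lam s] by (intro mult_right_mono) auto
      finally show ?thesis .
    qed
    then have "\<bar>eta t0\<bar> \<le> A\<^sup>2 * (2 * A) powr (2 * p + 1) * \<bar>c\<bar> powr (2 * p + 1) * decay_weight lam t0"
      unfolding eta_def using remainder_bound_improves[OF p lam A t0 int[OF t0] Yh Yg] by blast
    also have "\<dots> = (K' / 2) * decay_weight lam t0"
      unfolding K'_def K_def by simp
    also have "\<dots> < K' * decay_weight lam t0"
      using \<open>K' > 0\<close> decay_weight_pos[of lam t0] by simp
    finally show "\<bar>eta t0\<bar> < K' * decay_weight lam t0" .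
  qed (use t that in auto)
  then have "\<bar>eta t\<bar> < K' * decay_weight lam t"
    using far[of t] by (cases "t \<le> R + 1") auto
  then show ?thesis unfolding eta_def K'_def by simp
qed

lemma nonlinearity_bound_nonpos:
  fixes y M p s :: real
  assumes p: "p > 0" and M: "M \<ge> 0" and y: "\<bar>y\<bar> \<le> M * exp (- s / p)"
  shows "\<bar>\<bar>y\<bar> powr (2 * p) * y\<bar> \<le> M powr (2 * p + 1) * exp (-2 * s) * exp (- s / p)"
proof -
  have "\<bar>\<bar>y\<bar> powr (2 * p) * y\<bar> = \<bar>y\<bar> powr (2 * p + 1)"
    using p by (simp add: abs_nonlinearity)
  also have "\<dots> \<le> (M * exp (- s / p)) powr (2 * p + 1)"
    by (rule powr_mono2) (use y p in auto)
  also have "\<dots> = M powr (2 * p + 1) * exp (- s / p) powr (2 * p + 1)"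
    using M by (simp add: powr_mult)
  also have "exp (- s / p) powr (2 * p + 1) = exp (-2 * s) * exp (- s / p)"
    using p by (simp add: powr_def field_simps flip: exp_add)
  finally show ?thesis by (simp add: mult.assoc)
qed

text \<open>Continuity argument on \<open>[-L, 0]\<close>: the a priori bound \<open>|x| \<le> \<beta> e^(-t/p)\<close> controls the forcing
  \<open>n\<close>, and then the energy estimate improves it to \<open>B e^(-t/p)\<close> with \<open>B < \<beta>\<close>.\<close>
lemma energy_bootstrap_nonpos:
  fixes x dx n :: "real \<Rightarrow> real" and p lam L beta Q eps :: real
  assumes p: "p > 0" and Q: "Q \<ge> 0" and eps: "eps > 0"
    and dx: "\<And>s. (x has_real_derivative dx s) (at s)"
    and ddx: "\<And>s. (dx has_real_derivative (x s / p\<^sup>2 + ((exp (4 * s) - lam * exp (2 * s)) * x s - n s))) (at s)"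
    and forcing: "\<And>s. - L \<le> s \<Longrightarrow> s \<le> 0 \<Longrightarrow> \<bar>x s\<bar> \<le> beta * exp (- s / p)
                    \<Longrightarrow> \<bar>n s\<bar> \<le> Q * exp (-2 * s) * exp (- s / p)"
  defines "B \<equiv> exp (p * (1 + \<bar>lam\<bar>) / 2) * (energy p eps (x 0) (dx 0) + p * Q * exp (2 * L) / 2)"
  assumes close: "B < beta" and t: "- L \<le> t" "t \<le> 0"
  shows "energy p eps (x t) (dx t) \<le> B * exp (- t / p)"
proof -
  have step: "energy p eps (x t0) (dx t0) \<le> B * exp (- t0 / p)"
    if t0: "- L \<le> t0" "t0 \<le> 0" and hyp: "\<And>s. t0 < s \<Longrightarrow> s < 0 \<Longrightarrow> \<bar>x s\<bar> \<le> beta * exp (- s / p)" for t0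
  proof -
    have "energy p eps (x t0) (dx t0) \<le> exp (p * (1 + \<bar>lam\<bar>) / 2) * exp (- t0 / p)
        * (energy p eps (x 0) (dx 0) + p * Q * exp (-2 * t0) / 2)"
    proof (rule energy_growth_bound[OF p _ Q eps t0(2) dx ddx])
      fix s
      assume s: "t0 < s" "s < 0"
      have "\<bar>(exp (4 * s) - lam * exp (2 * s)) * x s\<bar> \<le> (1 + \<bar>lam\<bar>) * exp (2 * s) * \<bar>x s\<bar>"
        unfolding abs_mult using s by (intro mult_right_mono abs_exp4_sub_exp2_le) auto
      moreover have "\<bar>n s\<bar> \<le> Q * exp (-2 * s) * exp (- s / p)"
        using s t0 by (intro forcing hyp) auto
      ultimately show "\<bar>(exp (4 * s) - lam * exp (2 * s)) * x s - n s\<bar>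
          \<le> (1 + \<bar>lam\<bar>) * exp (2 * s) * \<bar>x s\<bar> + Q * exp (-2 * s) * exp (- s / p)"
        by (smt (verit, best) abs_triangle_ineq4)
    qed simp
    also have "\<dots> \<le> exp (p * (1 + \<bar>lam\<bar>) / 2) * exp (- t0 / p)
        * (energy p eps (x 0) (dx 0) + p * Q * exp (2 * L) / 2)"
      using t0 p Q by (intro mult_left_mono add_left_mono divide_right_mono) auto
    finally show ?thesis unfolding B_def by (simp add: ac_simps)
  qed
  have good: "\<bar>x s\<bar> < beta * exp (- s / p)" if "- L \<le> s" "s \<le> 0" for s
  proof (rule continuity_induction_leftwards[where a = "- L" and b = 0
        and f = "\<lambda>s. \<bar>x s\<bar>" and g = "\<lambda>s. beta * exp (- s / p)"])
    show "continuous_on {- L..0} (\<lambda>s. beta * exp (- s / p) - \<bar>x s\<bar>)"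
      using DERIV_isCont[OF dx] p by (intro continuous_intros continuous_at_imp_continuous_on) auto
    have "\<bar>x t0\<bar> < beta * exp (- t0 / p)" if "- L \<le> t0" "t0 \<le> 0"
      "\<And>s. t0 < s \<Longrightarrow> s < 0 \<Longrightarrow> \<bar>x s\<bar> \<le> beta * exp (- s / p)" for t0
    proof -
      have "B * exp (- t0 / p) < beta * exp (- t0 / p)" using close by simp
      then show ?thesis
        using abs_le_energy[of eps "x t0" p "dx t0"] step[OF that] eps by linarith
    qed
    note improve = this
    show "\<bar>x 0\<bar> < beta * exp (- 0 / p)"
      using t by (intro improve) auto
    show "\<And>t0. - L \<le> t0 \<Longrightarrow> t0 < 0 \<Longrightarrow> (\<And>s. t0 \<le> s \<Longrightarrow> s \<le> 0 \<Longrightarrow> \<bar>x s\<bar> \<le> beta * exp (- s / p))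
            \<Longrightarrow> \<bar>x t0\<bar> < beta * exp (- t0 / p)"
      by (rule improve) auto
  qed (use that in auto)
  show ?thesis
    using t good by (intro step) (auto intro: less_imp_le)
qed

lemma nonpos_if_le_powr_at_right:
  fixes y G b1 r :: real
  assumes b1: "b1 > 0" and r: "r > 0" and le: "\<And>b. 0 < b \<Longrightarrow> b < b1 \<Longrightarrow> y \<le> G * b powr r"
  shows "y \<le> 0"
proof -
  have "((\<lambda>b. G * b powr r) \<longlongrightarrow> G * 0) (at_right 0)"
    by (intro tendsto_mult tendsto_const tendsto_zero_powrI[OF _ tendsto_const _ r])
       (auto intro: tendsto_ident_at eventually_at_rightI[where b = 1] simp: less_imp_le)
  moreover have "eventually (\<lambda>b. y \<le> G * b powr r) (at_right 0)"
    using le b1 by (intro eventually_at_rightI[where b = b1]) auto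
  ultimately show ?thesis
    using tendsto_lowerbound by fastforce
qed

text \<open>Uniqueness for the nonlinear equation on \<open>[-L, 0]\<close>, via the bootstrap with \<open>\<beta> \<rightarrow> 0\<close>.\<close>
lemma nonpos_solution_vanishes:
  fixes x dx :: "real \<Rightarrow> real" and p lam L t :: real
  assumes p: "p > 0"
    and dx: "\<And>s. (x has_real_derivative dx s) (at s)"
    and ddx: "\<And>s. (dx has_real_derivative
                  (x s / p\<^sup>2 + ((exp (4 * s) - lam * exp (2 * s)) * x s - \<bar>x s\<bar> powr (2 * p) * x s))) (at s)"
    and zero: "x 0 = 0" "dx 0 = 0" and t: "- L \<le> t" "t \<le> 0"
  shows "x t = 0 \<and> dx t = 0"
proof -
  define G where "G = exp (p * (1 + \<bar>lam\<bar>) / 2) * (1 + p * exp (2 * L) / 2)"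
  have "G > 0" unfolding G_def using p by (simp add: add_pos_nonneg)
  define b1 where "b1 = (1 / G) powr (1 / (2 * p))"
  have "b1 > 0" unfolding b1_def using \<open>G > 0\<close> by simp
  have small: "\<bar>x t\<bar> \<le> (G * exp (- t / p)) * b powr (2 * p + 1)
      \<and> p * \<bar>dx t\<bar> \<le> (G * exp (- t / p)) * b powr (2 * p + 1)" if b: "0 < b" "b < b1" for b
  proof -
    define eps where "eps = (b powr (2 * p + 1))\<^sup>2"
    have eps: "eps > 0" unfolding eps_def using b by simp
    have E0: "energy p eps (x 0) (dx 0) = b powr (2 * p + 1)"
      unfolding energy_def eps_def zero using b by simp
    have "b powr (2 * p) < b1 powr (2 * p)" using b p by (intro powr_less_mono2) auto
    also have "b1 powr (2 * p) = 1 / G" unfolding b1_def using \<open>G > 0\<close> p by (simp add: powr_powr)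
    finally have "G * b powr (2 * p) < 1" using \<open>G > 0\<close> by (simp add: field_simps)
    then have "(G * b powr (2 * p)) * b < 1 * b" using b by (intro mult_strict_right_mono) auto
    moreover have B: "exp (p * (1 + \<bar>lam\<bar>) / 2) * (energy p eps (x 0) (dx 0) + p * b powr (2 * p + 1) * exp (2 * L) / 2)
        = (G * b powr (2 * p)) * b"
      unfolding E0 G_def using b by (simp add: powr_add algebra_simps)
    ultimately have close: "exp (p * (1 + \<bar>lam\<bar>) / 2)
        * (energy p eps (x 0) (dx 0) + p * b powr (2 * p + 1) * exp (2 * L) / 2) < b"
      by simp
    have "energy p eps (x t) (dx t) \<le> exp (p * (1 + \<bar>lam\<bar>) / 2)
        * (energy p eps (x 0) (dx 0) + p * b powr (2 * p + 1) * exp (2 * L) / 2) * exp (- t / p)"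
    proof (rule energy_bootstrap_nonpos[OF p _ eps dx ddx _ close t])
      show "\<bar>\<bar>x s\<bar> powr (2 * p) * x s\<bar> \<le> b powr (2 * p + 1) * exp (-2 * s) * exp (- s / p)"
        if "- L \<le> s" "s \<le> 0" "\<bar>x s\<bar> \<le> b * exp (- s / p)" for s
        using nonlinearity_bound_nonpos[OF p _ that(3)] b by simp
    qed simp
    also have "\<dots> = (G * b powr (2 * p)) * b * exp (- t / p)" unfolding B ..
    also have "\<dots> = (G * exp (- t / p)) * b powr (2 * p + 1)"
      using b by (simp add: powr_add algebra_simps)
    finally show ?thesis
      using abs_le_energy[of eps "x t" p "dx t"] abs_deriv_le_energy[where u = "x t" and v = "dx t" and eps = eps and p = p] eps p
      by auto
  qed
  have "\<bar>x t\<bar> \<le> 0" "p * \<bar>dx t\<bar> \<le> 0"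
    by (rule nonpos_if_le_powr_at_right[OF \<open>b1 > 0\<close>, of "2 * p + 1"]; use p small in force)+
  then show ?thesis using p by (simp add: mult_le_0_iff)
qed

text \<open>The forcing is written as \<open>N(c \<Upsilon>\<^sub>h + \<eta>)\<close> so that the estimates on \<open>[-L, 0]\<close> can treat \<open>\<eta>\<close>
  as the unknown.\<close>
lemma remainder_ode:
  fixes Yh Yg Psi :: "real \<Rightarrow> real" and p lam c :: real
  assumes Psi: "is_Psi_c p lam Yh Yg c Psi"
    and Yh': "\<And>s. (Yh has_real_derivative deriv Yh s) (at s)"
    and Yh'': "\<And>s. (deriv Yh has_real_derivative (1/p\<^sup>2 - lam * exp (2 * s) + exp (4 * s)) * Yh s) (at s)"
  shows "((\<lambda>s. Psi s - c * Yh s) has_real_derivative deriv Psi s - c * deriv Yh s) (at s)"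
    and "((\<lambda>s. deriv Psi s - c * deriv Yh s) has_real_derivative
           (Psi s - c * Yh s) / p\<^sup>2 + ((exp (4 * s) - lam * exp (2 * s)) * (Psi s - c * Yh s)
            - \<bar>c * Yh s + (Psi s - c * Yh s)\<bar> powr (2 * p) * (c * Yh s + (Psi s - c * Yh s)))) (at s)"
proof -
  from Psi obtain dPsi where dPsi: "\<And>s. (Psi has_real_derivative dPsi s) (at s)"
    "\<And>s. (dPsi has_real_derivative (Psi s / p\<^sup>2 - \<bar>Psi s\<bar> powr (2 * p) * Psi s
           - lam * exp (2 * s) * Psi s + exp (4 * s) * Psi s)) (at s)"
    unfolding is_Psi_c_def by blast
  then have "deriv Psi = dPsi" by (intro ext DERIV_imp_deriv)
  show "((\<lambda>s. Psi s - c * Yh s) has_real_derivative deriv Psi s - c * deriv Yh s) (at s)"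
    unfolding \<open>deriv Psi = dPsi\<close> by (intro DERIV_diff DERIV_cmult dPsi Yh')
  show "((\<lambda>s. deriv Psi s - c * deriv Yh s) has_real_derivative
           (Psi s - c * Yh s) / p\<^sup>2 + ((exp (4 * s) - lam * exp (2 * s)) * (Psi s - c * Yh s)
            - \<bar>c * Yh s + (Psi s - c * Yh s)\<bar> powr (2 * p) * (c * Yh s + (Psi s - c * Yh s)))) (at s)"
    unfolding \<open>deriv Psi = dPsi\<close>
    by (rule DERIV_cong[OF DERIV_diff[OF dPsi(2) DERIV_cmult[OF Yh'']]]) (simp add: algebra_simps diff_divide_distrib)
qed

lemma deriv_bound_mvt:
  fixes x dx ddx :: "real \<Rightarrow> real"
  assumes dx: "\<And>s. (x has_real_derivative dx s) (at s)"
    and ddx: "\<And>s. (dx has_real_derivative ddx s) (at s)"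
    and x_bound: "\<And>s. 0 \<le> s \<Longrightarrow> s \<le> 1 \<Longrightarrow> \<bar>x s\<bar> \<le> E"
    and ddx_bound: "\<And>s. 0 \<le> s \<Longrightarrow> s \<le> 1 \<Longrightarrow> \<bar>ddx s\<bar> \<le> D"
  shows "\<bar>dx 0\<bar> \<le> 2 * E + D"
proof -
  obtain \<xi> where \<xi>: "0 < \<xi>" "\<xi> < 1" "x 1 - x 0 = (1 - 0) * dx \<xi>"
    using MVT2[of 0 1 x dx] dx by auto
  obtain \<zeta> where \<zeta>: "0 < \<zeta>" "\<zeta> < \<xi>" "dx \<xi> - dx 0 = (\<xi> - 0) * ddx \<zeta>"
    using MVT2[of 0 \<xi> dx ddx] ddx \<xi>(1) by auto
  have "\<bar>dx \<xi>\<bar> \<le> 2 * E" using \<xi>(3) x_bound[of 1] x_bound[of 0] by simp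
  moreover have "\<bar>\<xi> * ddx \<zeta>\<bar> \<le> 1 * D"
    unfolding abs_mult using \<xi> \<zeta> ddx_bound[of \<zeta>] by (intro mult_mono) auto
  moreover have "dx 0 = dx \<xi> - \<xi> * ddx \<zeta>" using \<zeta>(3) by simp
  ultimately show ?thesis by linarith
qed

lemma ode_coefficient_bound:
  fixes lam s p :: real
  assumes "0 \<le> s" "s \<le> 1"
  shows "\<bar>1/p\<^sup>2 - lam * exp (2 * s) + exp (4 * s)\<bar> \<le> 1/p\<^sup>2 + \<bar>lam\<bar> * exp 2 + exp 4"
proof -
  have "\<bar>lam * exp (2 * s)\<bar> \<le> \<bar>lam\<bar> * exp 2" using assms by (simp add: abs_mult mult_left_mono)
  moreover have "exp (4 * s) \<le> exp 4" using assms by simp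
  moreover have "0 \<le> 1/p\<^sup>2" "0 < exp (4 * s)" by simp_all
  moreover have "lam * exp (2 * s) \<le> \<bar>lam * exp (2 * s)\<bar>" "- (lam * exp (2 * s)) \<le> \<bar>lam * exp (2 * s)\<bar>"
    by auto
  ultimately show ?thesis by (simp only: abs_le_iff) linarith
qed

lemma Psi_c_remainder_bound_nonneg:
  fixes Yh Yg Psi :: "real \<Rightarrow> real" and p lam A c t :: real
  assumes p: "p > 0" and lam: "lam \<le> 2" and A: "A > 0"
    and Yh': "\<And>s. (Yh has_real_derivative deriv Yh s) (at s)"
    and Yh'': "\<And>s. (deriv Yh has_real_derivative (1/p\<^sup>2 - lam * exp (2 * s) + exp (4 * s)) * Yh s) (at s)"
    and Yh: "\<And>s. 0 \<le> s \<Longrightarrow> \<bar>Yh s\<bar> \<le> A * decay_weight lam s"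
    and Yg: "\<And>s. 0 \<le> s \<Longrightarrow> \<bar>Yg s\<bar> \<le> A * exp (-2 * s) / decay_weight lam s"
    and Psi: "is_Psi_c p lam Yh Yg c Psi"
  defines "K \<equiv> 2 * A\<^sup>2 * (2 * A) powr (2 * p + 1)"
  assumes small: "K * \<bar>c\<bar> powr (2 * p) \<le> A" and t: "0 \<le> t"
  shows "\<bar>Psi t - c * Yh t\<bar> \<le> K * \<bar>c\<bar> powr (2 * p + 1) * decay_weight lam t"
proof -
  from Psi obtain C where
    int: "\<And>t. 0 \<le> t \<Longrightarrow> ((\<lambda>s. (Yh s * Yg t - Yh t * Yg s) * (\<bar>Psi s\<bar> powr (2 * p) * Psi s))
                has_integral (Psi t - c * Yh t)) {t..}"
    and decay: "\<And>t. 0 \<le> t \<Longrightarrow> \<bar>Psi t - c * Yh t\<bar>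
                 \<le> C * \<bar>c\<bar> powr (2 * p + 1) * exp (- (1 - lam / 2) * t) * exp (- exp (2 * t) / 2)"
    unfolding is_Psi_c_def by blast
  have "\<bar>Psi t - c * Yh t\<bar> \<le> C * \<bar>c\<bar> powr (2 * p + 1) * decay_weight lam t" if "0 \<le> t" for t
    using decay[OF that] by (simp only: mult.assoc decay_weight_eq)
  moreover have "continuous_on {0..} (\<lambda>s. Psi s - c * Yh s)"
    using DERIV_isCont[OF remainder_ode(1)[OF Psi Yh' Yh'']]
    by (intro continuous_at_imp_continuous_on) auto
  ultimately show ?thesis
    using small t unfolding K_def by (intro remainder_bound_nonneg[OF p lam A int Yh Yg]) auto
qed

lemma remainder_forcing_bound:
  fixes y h c p lam s E P :: real
  assumes p: "p > 0" and s: "0 \<le> s" "s \<le> 1" and E: "\<bar>y - c * h\<bar> \<le> E" and P: "\<bar>y\<bar> \<le> P"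
  shows "\<bar>(y - c * h) / p\<^sup>2 + ((exp (4 * s) - lam * exp (2 * s)) * (y - c * h)
            - \<bar>c * h + (y - c * h)\<bar> powr (2 * p) * (c * h + (y - c * h)))\<bar>
         \<le> (1/p\<^sup>2 + \<bar>lam\<bar> * exp 2 + exp 4) * E + P powr (2 * p + 1)"
proof -
  have "\<bar>(y - c * h) / p\<^sup>2 + ((exp (4 * s) - lam * exp (2 * s)) * (y - c * h)
            - \<bar>c * h + (y - c * h)\<bar> powr (2 * p) * (c * h + (y - c * h)))\<bar>
        = \<bar>(1/p\<^sup>2 - lam * exp (2 * s) + exp (4 * s)) * (y - c * h) - \<bar>y\<bar> powr (2 * p) * y\<bar>"
    by (simp add: algebra_simps diff_divide_distrib)
  also have "\<dots> \<le> \<bar>1/p\<^sup>2 - lam * exp (2 * s) + exp (4 * s)\<bar> * \<bar>y - c * h\<bar> + \<bar>y\<bar> powr (2 * p + 1)"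
    using abs_triangle_ineq4 abs_nonlinearity[of p y] p unfolding abs_mult[symmetric]
    by (metis less_imp_le)
  also have "\<dots> \<le> (1/p\<^sup>2 + \<bar>lam\<bar> * exp 2 + exp 4) * E + P powr (2 * p + 1)"
    using s p E P by (intro add_mono mult_mono ode_coefficient_bound powr_mono2) auto
  finally show ?thesis .
qed

lemma remainder_initial_bound:
  fixes Yh Yg Psi :: "real \<Rightarrow> real" and p lam A c :: real
  assumes p: "p > 0" and lam: "lam \<le> 2" and A: "A > 0"
    and Yh': "\<And>s. (Yh has_real_derivative deriv Yh s) (at s)"
    and Yh'': "\<And>s. (deriv Yh has_real_derivative (1/p\<^sup>2 - lam * exp (2 * s) + exp (4 * s)) * Yh s) (at s)"
    and Yh: "\<And>s. 0 \<le> s \<Longrightarrow> \<bar>Yh s\<bar> \<le> A * decay_weight lam s"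
    and Yg: "\<And>s. 0 \<le> s \<Longrightarrow> \<bar>Yg s\<bar> \<le> A * exp (-2 * s) / decay_weight lam s"
    and Psi: "is_Psi_c p lam Yh Yg c Psi"
  defines "Ke \<equiv> 2 * A\<^sup>2 * (2 * A) powr (2 * p + 1)"
  defines "K \<equiv> p * ((2 + 1/p\<^sup>2 + \<bar>lam\<bar> * exp 2 + exp 4) * Ke + (2 * A) powr (2 * p + 1)) + Ke"
  assumes small: "Ke * \<bar>c\<bar> powr (2 * p) \<le> A"
  shows "p * \<bar>deriv Psi 0 - c * deriv Yh 0\<bar> + \<bar>Psi 0 - c * Yh 0\<bar> \<le> K * \<bar>c\<bar> powr (2 * p + 1)"
proof -
  define E where "E = Ke * \<bar>c\<bar> powr (2 * p + 1)"
  have remainder: "\<bar>Psi s - c * Yh s\<bar> \<le> E" if "0 \<le> s" "s \<le> 1" for s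
  proof -
    have "\<bar>Psi s - c * Yh s\<bar> \<le> E * decay_weight lam s"
      unfolding E_def Ke_def using small that
      by (intro Psi_c_remainder_bound_nonneg[OF p lam A Yh' Yh'' Yh Yg Psi]) (auto simp: Ke_def)
    also have "\<dots> \<le> E * 1"
      using that decay_weight_le_one[OF lam] unfolding E_def Ke_def by (intro mult_left_mono) auto
    finally show ?thesis by simp
  qed
  have "E = (Ke * \<bar>c\<bar> powr (2 * p)) * \<bar>c\<bar>"
    unfolding E_def using p by (cases "c = 0") (auto simp: powr_add)
  also have "\<dots> \<le> A * \<bar>c\<bar>" using small by (intro mult_right_mono) auto
  finally have "E \<le> A * \<bar>c\<bar>" .
  have Psi_bound: "\<bar>Psi s\<bar> \<le> 2 * A * \<bar>c\<bar>" if "0 \<le> s" "s \<le> 1" for s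
  proof -
    have "\<bar>Yh s\<bar> \<le> A * 1"
      using Yh[of s] mult_left_mono[OF decay_weight_le_one[OF lam, of s], of A] A that by linarith
    moreover have "\<bar>Psi s - c * Yh s\<bar> \<le> E * 1" using remainder[OF that] by simp
    ultimately have "\<bar>Psi s\<bar> \<le> (A * \<bar>c\<bar> + E) * 1" by (rule abs_le_of_remainder_bound)
    then show ?thesis using \<open>E \<le> A * \<bar>c\<bar>\<close> by (simp add: algebra_simps)
  qed
  have "\<bar>deriv Psi 0 - c * deriv Yh 0\<bar>
      \<le> 2 * E + ((1/p\<^sup>2 + \<bar>lam\<bar> * exp 2 + exp 4) * E + (2 * A * \<bar>c\<bar>) powr (2 * p + 1))"
    by (rule deriv_bound_mvt[OF remainder_ode[OF Psi Yh' Yh''] remainder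
          remainder_forcing_bound[OF p _ _ remainder Psi_bound]])
  also have "\<dots> = ((2 + 1/p\<^sup>2 + \<bar>lam\<bar> * exp 2 + exp 4) * Ke + (2 * A) powr (2 * p + 1)) * \<bar>c\<bar> powr (2 * p + 1)"
    unfolding E_def using A by (simp add: powr_mult algebra_simps)
  finally have "p * \<bar>deriv Psi 0 - c * deriv Yh 0\<bar>
      \<le> p * (((2 + 1/p\<^sup>2 + \<bar>lam\<bar> * exp 2 + exp 4) * Ke + (2 * A) powr (2 * p + 1)) * \<bar>c\<bar> powr (2 * p + 1))"
    using p by (intro mult_left_mono) auto
  moreover have "\<bar>Psi 0 - c * Yh 0\<bar> \<le> E" using remainder[of 0] by simp
  ultimately show ?thesis unfolding K_def E_def by (simp add: algebra_simps)
qed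

lemma remainder_bound_nonpos_nonzero:
  fixes x dx Yh :: "real \<Rightarrow> real" and p lam L Ah K c t :: real
  assumes p: "p > 0" and c: "c \<noteq> 0" and L: "L \<ge> 0"
    and dx: "\<And>s. (x has_real_derivative dx s) (at s)"
    and ddx: "\<And>s. (dx has_real_derivative (x s / p\<^sup>2 + ((exp (4 * s) - lam * exp (2 * s)) * x s
                 - \<bar>c * Yh s + x s\<bar> powr (2 * p) * (c * Yh s + x s)))) (at s)"
    and Yh: "\<And>s. s \<le> 0 \<Longrightarrow> \<bar>Yh s\<bar> \<le> Ah * exp (- s / p)"
    and init: "p * \<bar>dx 0\<bar> + \<bar>x 0\<bar> \<le> K * \<bar>c\<bar> powr (2 * p + 1)"
  defines "D \<equiv> exp (p * (1 + \<bar>lam\<bar>) / 2) * (K + 1 + p * (2 * Ah) powr (2 * p + 1) / 2)"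
  assumes small: "D * exp (2 * L) * \<bar>c\<bar> powr (2 * p) < Ah" and t: "- L \<le> t" "t \<le> 0"
  shows "\<bar>x t\<bar> \<le> D * \<bar>c\<bar> powr (2 * p + 1) * exp (2 * L) * exp (- t / p)
       \<and> p * \<bar>dx t\<bar> \<le> D * \<bar>c\<bar> powr (2 * p + 1) * exp (2 * L) * exp (- t / p)"
proof -
  define cp where "cp = \<bar>c\<bar> powr (2 * p + 1)"
  define eps where "eps = cp\<^sup>2"
  define Q where "Q = (2 * Ah) powr (2 * p + 1) * cp"
  define m where "m = exp (p * (1 + \<bar>lam\<bar>) / 2)"
  have cp: "cp > 0" unfolding cp_def using c by simp
  have eps: "eps > 0" unfolding eps_def using cp by simp
  have "0 \<le> K * cp" using init unfolding cp_def by (meson abs_ge_zero add_nonneg_nonneg mult_nonneg_nonneg order_trans p less_imp_le)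
  then have K: "K \<ge> 0" using cp by (simp add: zero_le_mult_iff)
  have "0 < D * exp (2 * L) * \<bar>c\<bar> powr (2 * p)" unfolding D_def using K p c by (simp add: add_pos_nonneg)
  then have Ah: "Ah > 0" using small by linarith
  have "energy p eps (x 0) (dx 0) \<le> p * \<bar>dx 0\<bar> + \<bar>x 0\<bar> + sqrt eps"
    using eps p by (intro energy_le) auto
  also have "\<dots> \<le> (K + 1) * cp" using init cp unfolding eps_def cp_def by (simp add: algebra_simps)
  also have "\<dots> \<le> (K + 1) * cp * exp (2 * L)"
    by (rule mult_le_cancel_left1[THEN iffD2]) (use K cp L in \<open>auto simp: mult_less_0_iff\<close>)
  finally have "m * (energy p eps (x 0) (dx 0) + p * Q * exp (2 * L) / 2) \<le> m * ((K + 1) * cp * exp (2 * L) + p * Q * exp (2 * L) / 2)"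
    unfolding m_def by (intro mult_left_mono add_right_mono) auto
  also have "\<dots> = D * cp * exp (2 * L)" unfolding D_def Q_def m_def by (simp add: algebra_simps)
  finally have B: "m * (energy p eps (x 0) (dx 0) + p * Q * exp (2 * L) / 2) \<le> D * cp * exp (2 * L)" .
  have "D * cp * exp (2 * L) = (D * exp (2 * L) * \<bar>c\<bar> powr (2 * p)) * \<bar>c\<bar>"
    unfolding cp_def using c by (simp add: powr_add algebra_simps)
  also have "\<dots> < Ah * \<bar>c\<bar>" using small c by (intro mult_strict_right_mono) auto
  finally have close: "m * (energy p eps (x 0) (dx 0) + p * Q * exp (2 * L) / 2) < Ah * \<bar>c\<bar>"
    using B by linarith
  have "energy p eps (x t) (dx t) \<le> m * (energy p eps (x 0) (dx 0) + p * Q * exp (2 * L) / 2) * exp (- t / p)"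
    unfolding m_def
  proof (rule energy_bootstrap_nonpos[OF p _ eps dx ddx _ close[unfolded m_def] t])
    show "Q \<ge> 0" unfolding Q_def using cp by simp
    fix s
    assume s: "- L \<le> s" "s \<le> 0" and x: "\<bar>x s\<bar> \<le> Ah * \<bar>c\<bar> * exp (- s / p)"
    have "\<bar>c * Yh s + x s\<bar> \<le> \<bar>c\<bar> * \<bar>Yh s\<bar> + \<bar>x s\<bar>"
      by (metis abs_mult abs_triangle_ineq)
    also have "\<dots> \<le> \<bar>c\<bar> * (Ah * exp (- s / p)) + Ah * \<bar>c\<bar> * exp (- s / p)"
      using Yh[OF s(2)] x by (intro add_mono mult_left_mono) auto
    finally have "\<bar>c * Yh s + x s\<bar> \<le> (2 * Ah * \<bar>c\<bar>) * exp (- s / p)" by (simp add: algebra_simps)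
    from nonlinearity_bound_nonpos[OF p _ this]
    show "\<bar>\<bar>c * Yh s + x s\<bar> powr (2 * p) * (c * Yh s + x s)\<bar> \<le> Q * exp (-2 * s) * exp (- s / p)"
      using Ah unfolding Q_def cp_def by (simp add: powr_mult)
  qed
  also have "\<dots> \<le> D * cp * exp (2 * L) * exp (- t / p)" using B by simp
  finally show ?thesis
    using abs_le_energy[of eps "x t" p "dx t"] abs_deriv_le_energy[where u = "x t" and v = "dx t" and eps = eps and p = p]
      eps p unfolding cp_def by auto
qed

lemma remainder_bound_nonpos:
  fixes x dx Yh :: "real \<Rightarrow> real" and p lam L Ah K c t :: real
  assumes p: "p > 0" and L: "L \<ge> 0"
    and dx: "\<And>s. (x has_real_derivative dx s) (at s)"
    and ddx: "\<And>s. (dx has_real_derivative (x s / p\<^sup>2 + ((exp (4 * s) - lam * exp (2 * s)) * x s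
                 - \<bar>c * Yh s + x s\<bar> powr (2 * p) * (c * Yh s + x s)))) (at s)"
    and Yh: "\<And>s. s \<le> 0 \<Longrightarrow> \<bar>Yh s\<bar> \<le> Ah * exp (- s / p)"
    and init: "p * \<bar>dx 0\<bar> + \<bar>x 0\<bar> \<le> K * \<bar>c\<bar> powr (2 * p + 1)"
  defines "D \<equiv> exp (p * (1 + \<bar>lam\<bar>) / 2) * (K + 1 + p * (2 * Ah) powr (2 * p + 1) / 2)"
  assumes small: "D * exp (2 * L) * \<bar>c\<bar> powr (2 * p) < Ah" and t: "- L \<le> t" "t \<le> 0"
  shows "\<bar>x t\<bar> \<le> D * \<bar>c\<bar> powr (2 * p + 1) * exp (2 * L) * exp (- t / p)
       \<and> p * \<bar>dx t\<bar> \<le> D * \<bar>c\<bar> powr (2 * p + 1) * exp (2 * L) * exp (- t / p)"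
proof (cases "c = 0")
  case True
  have "p * \<bar>dx 0\<bar> + \<bar>x 0\<bar> \<le> 0" using init True by simp
  moreover have "0 \<le> p * \<bar>dx 0\<bar>" using p by simp
  ultimately have "p * \<bar>dx 0\<bar> \<le> 0" "\<bar>x 0\<bar> \<le> 0" by linarith+
  then have "x 0 = 0" "dx 0 = 0" using p by (simp_all add: mult_le_0_iff)
  moreover have "(dx has_real_derivative (x s / p\<^sup>2
      + ((exp (4 * s) - lam * exp (2 * s)) * x s - \<bar>x s\<bar> powr (2 * p) * x s))) (at s)" for s
    using ddx[of s] True by simp
  ultimately show ?thesis
    using nonpos_solution_vanishes[OF p dx, of lam L t] t True by simp
next
  case False
  then show ?thesis
    using remainder_bound_nonpos_nonzero[OF p False L dx ddx Yh init small[unfolded D_def] t]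
    unfolding D_def by simp
qed

lemma remainder_estimate:
  fixes Yh Yg :: "real \<Rightarrow> real" and p lam A Ah :: real
  assumes p: "p > 0" and lam: "lam \<le> 2" and A: "A > 0"
    and Yh': "\<And>s. (Yh has_real_derivative deriv Yh s) (at s)"
    and Yh'': "\<And>s. (deriv Yh has_real_derivative (1/p\<^sup>2 - lam * exp (2 * s) + exp (4 * s)) * Yh s) (at s)"
    and Yh_nonneg: "\<And>s. 0 \<le> s \<Longrightarrow> \<bar>Yh s\<bar> \<le> A * decay_weight lam s"
    and Yg_nonneg: "\<And>s. 0 \<le> s \<Longrightarrow> \<bar>Yg s\<bar> \<le> A * exp (-2 * s) / decay_weight lam s"
    and Yh_nonpos: "\<And>s. s \<le> 0 \<Longrightarrow> \<bar>Yh s\<bar> \<le> A * exp (- s / p)"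
  obtains C \<delta> where "C > 0" "\<delta> > 0"
    "\<And>L c Psi t. 0 \<le> L \<Longrightarrow> \<bar>c\<bar> powr (2 * p) * exp (2 * L) < \<delta> \<Longrightarrow> is_Psi_c p lam Yh Yg c Psi
       \<Longrightarrow> - L \<le> t \<Longrightarrow> t \<le> 0
       \<Longrightarrow> \<bar>Psi t - c * Yh t\<bar> \<le> C * \<bar>c\<bar> powr (2 * p + 1) * exp (2 * L) * exp (- t / p)
         \<and> \<bar>deriv Psi t - c * deriv Yh t\<bar> \<le> C * \<bar>c\<bar> powr (2 * p + 1) * exp (2 * L) * exp (- t / p)"
proof -
  define Ke where "Ke = 2 * A\<^sup>2 * (2 * A) powr (2 * p + 1)"
  define K where "K = p * ((2 + 1/p\<^sup>2 + \<bar>lam\<bar> * exp 2 + exp 4) * Ke + (2 * A) powr (2 * p + 1)) + Ke"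
  define D where "D = exp (p * (1 + \<bar>lam\<bar>) / 2) * (K + 1 + p * (2 * A) powr (2 * p + 1) / 2)"
  have Ke: "Ke > 0" unfolding Ke_def using A by simp
  have D: "D > 0" unfolding D_def K_def using Ke p by (simp add: add_pos_nonneg)
  show ?thesis
  proof (rule that[of "D * max 1 (1 / p)" "min (A / Ke) (A / D)"])
    show "D * max 1 (1 / p) > 0" "min (A / Ke) (A / D) > 0" using A Ke D by auto
    fix L c Psi t
    assume L: "0 \<le> L" and c: "\<bar>c\<bar> powr (2 * p) * exp (2 * L) < min (A / Ke) (A / D)"
      and Psi: "is_Psi_c p lam Yh Yg c Psi" and t: "- L \<le> t" "t \<le> 0"
    have "\<bar>c\<bar> powr (2 * p) \<le> \<bar>c\<bar> powr (2 * p) * exp (2 * L)" using L by (simp add: mult_le_cancel_left1)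
    then have "Ke * \<bar>c\<bar> powr (2 * p) \<le> Ke * (\<bar>c\<bar> powr (2 * p) * exp (2 * L))"
      using Ke by (intro mult_left_mono) auto
    also have "\<dots> < A" using c Ke by (simp add: field_simps)
    finally have "Ke * \<bar>c\<bar> powr (2 * p) \<le> A" by simp
    have small: "D * exp (2 * L) * \<bar>c\<bar> powr (2 * p) < A"
      using c D by (simp add: field_simps)
    from \<open>Ke * \<bar>c\<bar> powr (2 * p) \<le> A\<close> have init: "p * \<bar>deriv Psi 0 - c * deriv Yh 0\<bar> + \<bar>Psi 0 - c * Yh 0\<bar> \<le> K * \<bar>c\<bar> powr (2 * p + 1)"
      unfolding K_def Ke_def by (intro remainder_initial_bound[OF p lam A Yh' Yh'' Yh_nonneg Yg_nonneg Psi])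
    define R where "R = D * \<bar>c\<bar> powr (2 * p + 1) * exp (2 * L) * exp (- t / p)"
    have "\<bar>Psi t - c * Yh t\<bar> \<le> R \<and> p * \<bar>deriv Psi t - c * deriv Yh t\<bar> \<le> R"
      using remainder_bound_nonpos[OF p L remainder_ode[OF Psi Yh' Yh''] Yh_nonpos init small[unfolded D_def] t]
      unfolding R_def D_def .
    then have "\<bar>Psi t - c * Yh t\<bar> \<le> R" "\<bar>deriv Psi t - c * deriv Yh t\<bar> \<le> (1 / p) * R"
      using p by (auto simp: pos_le_divide_eq mult.commute)
    moreover have "R \<ge> 0" unfolding R_def using D by simp
    then have "1 * R \<le> max 1 (1 / p) * R" "(1 / p) * R \<le> max 1 (1 / p) * R"
      by (intro mult_right_mono; simp)+
    ultimately have "\<bar>Psi t - c * Yh t\<bar> \<le> max 1 (1 / p) * R"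
      "\<bar>deriv Psi t - c * deriv Yh t\<bar> \<le> max 1 (1 / p) * R"
      by linarith+
    then show "\<bar>Psi t - c * Yh t\<bar> \<le> D * max 1 (1 / p) * \<bar>c\<bar> powr (2 * p + 1) * exp (2 * L) * exp (- t / p)
      \<and> \<bar>deriv Psi t - c * deriv Yh t\<bar> \<le> D * max 1 (1 / p) * \<bar>c\<bar> powr (2 * p + 1) * exp (2 * L) * exp (- t / p)"
      unfolding R_def by (simp add: mult_ac)
  qed
qed

lemma Upsilon_bounds:
  fixes U Yg :: "real \<Rightarrow> real" and p lam :: real
  assumes p: "p > 0"
    and U: "is_tricomi_U (kummer_alpha p lam) (kummer_beta p) U"
    and Yg: "is_Upsilon_g p lam (Upsilon_h U p) Yg"
  obtains A where "A > 0"
    "\<And>s. 0 \<le> s \<Longrightarrow> \<bar>Upsilon_h U p s\<bar> \<le> A * decay_weight lam s"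
    "\<And>s. 0 \<le> s \<Longrightarrow> \<bar>Yg s\<bar> \<le> A * exp (-2 * s) / decay_weight lam s"
    "\<And>s. s \<le> 0 \<Longrightarrow> \<bar>Upsilon_h U p s\<bar> \<le> A * exp (- s / p)"
proof -
  obtain A1 where A1: "\<And>s. 0 \<le> s \<Longrightarrow> \<bar>Upsilon_h U p s\<bar> \<le> A1 * decay_weight lam s"
    using Upsilon_h_bound_nonneg[OF U p] by blast
  obtain A2 where A2: "\<And>s. 0 \<le> s \<Longrightarrow> \<bar>Yg s\<bar> \<le> A2 * exp (-2 * s) / decay_weight lam s"
    using Upsilon_g_bound_nonneg[OF Yg] by blast
  obtain A3 where A3: "\<And>s. s \<le> 0 \<Longrightarrow> \<bar>Upsilon_h U p s\<bar> \<le> A3 * exp (- s / p)"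
    using linear_solution_bound_nonpos[OF p Upsilon_h_linear_ode[OF p U]] by blast
  define A where "A = max 1 (max A1 (max A2 A3))"
  show ?thesis
  proof (rule that[of A])
    show "A > 0" unfolding A_def by simp
    have "A1 \<le> A" "A2 \<le> A" "A3 \<le> A" unfolding A_def by auto
    fix s :: real
    show "\<bar>Upsilon_h U p s\<bar> \<le> A * decay_weight lam s" if "0 \<le> s"
      using A1[OF that] mult_right_mono[OF \<open>A1 \<le> A\<close> less_imp_le[OF decay_weight_pos[of lam s]]]
      by linarith
    show "\<bar>Yg s\<bar> \<le> A * exp (-2 * s) / decay_weight lam s" if "0 \<le> s"
      using A2[OF that] divide_right_mono[OF mult_right_mono[OF \<open>A2 \<le> A\<close>], of "exp (-2 * s)" "decay_weight lam s"]
        decay_weight_pos[of lam s] by force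
    show "\<bar>Upsilon_h U p s\<bar> \<le> A * exp (- s / p)" if "s \<le> 0"
      using A3[OF that] mult_right_mono[OF \<open>A3 \<le> A\<close> less_imp_le[OF exp_gt_zero[of "- s / p"]]]
      by linarith
  qed
qed

lemma powr_small_amplitude:
  fixes c \<delta> b q r :: real
  assumes q: "q > 0" and \<delta>: "\<delta> > 0" and b: "b > 0" and c: "\<bar>c\<bar> < \<delta> powr (1 / q) * b powr (- r)"
  shows "\<bar>c\<bar> powr q * b powr (q * r) < \<delta>"
proof -
  have "\<bar>c\<bar> powr q < (\<delta> powr (1 / q) * b powr (- r)) powr q"
    using c q by (intro powr_less_mono2) auto
  also have "\<dots> = \<delta> * b powr (- r * q)"
    using q \<delta> b by (simp add: powr_mult powr_powr)
  finally have "\<bar>c\<bar> powr q * b powr (q * r) < \<delta> * b powr (- r * q) * b powr (q * r)"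
    using b by (intro mult_strict_right_mono) auto
  also have "\<delta> * b powr (- r * q) * b powr (q * r) = \<delta>"
    using b by (simp add: mult.assoc flip: powr_add)
  finally show ?thesis .
qed



lemma remainder_estimate_rescaled:
  fixes Yh Yg :: "real \<Rightarrow> real" and p lam A a :: real
  assumes p: "p > 0" and lam: "lam \<le> 2" and A: "A > 0" and a: "a \<le> 1"
    and Yh': "\<And>s. (Yh has_real_derivative deriv Yh s) (at s)"
    and Yh'': "\<And>s. (deriv Yh has_real_derivative (1/p\<^sup>2 - lam * exp (2 * s) + exp (4 * s)) * Yh s) (at s)"
    and Yh_nonneg: "\<And>s. 0 \<le> s \<Longrightarrow> \<bar>Yh s\<bar> \<le> A * decay_weight lam s"
    and Yg_nonneg: "\<And>s. 0 \<le> s \<Longrightarrow> \<bar>Yg s\<bar> \<le> A * exp (-2 * s) / decay_weight lam s"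
    and Yh_nonpos: "\<And>s. s \<le> 0 \<Longrightarrow> \<bar>Yh s\<bar> \<le> A * exp (- s / p)"
  shows "\<exists>b0>0. \<exists>C>0. \<forall>b\<ge>b0. \<exists>c0>0. \<forall>c Psi.
           \<bar>c\<bar> < c0 * b powr (- (1 - a)) \<longrightarrow> is_Psi_c p lam Yh Yg c Psi \<longrightarrow>
           (\<forall>t\<in>{- (1 - a) * p * ln b .. 0}.
              \<bar>Psi t - c * Yh t\<bar> \<le> C * \<bar>c\<bar> powr (2 * p + 1) * b powr (2 * p * (1 - a)) * exp (- t / p)
            \<and> \<bar>deriv Psi t - c * deriv Yh t\<bar> \<le> C * \<bar>c\<bar> powr (2 * p + 1) * b powr (2 * p * (1 - a)) * exp (- t / p))"
proof -
  obtain C \<delta> where "C > 0" "\<delta> > 0" and estimate: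
    "\<And>L c Psi t. 0 \<le> L \<Longrightarrow> \<bar>c\<bar> powr (2 * p) * exp (2 * L) < \<delta> \<Longrightarrow> is_Psi_c p lam Yh Yg c Psi
       \<Longrightarrow> - L \<le> t \<Longrightarrow> t \<le> 0
       \<Longrightarrow> \<bar>Psi t - c * Yh t\<bar> \<le> C * \<bar>c\<bar> powr (2 * p + 1) * exp (2 * L) * exp (- t / p)
         \<and> \<bar>deriv Psi t - c * deriv Yh t\<bar> \<le> C * \<bar>c\<bar> powr (2 * p + 1) * exp (2 * L) * exp (- t / p)"
    using remainder_estimate[OF p lam A Yh' Yh'' Yh_nonneg Yg_nonneg Yh_nonpos] by blast
  show ?thesis
  proof (rule exI[of _ 1], rule conjI[OF zero_less_one], rule exI[of _ C], rule conjI[OF \<open>C > 0\<close>],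
      intro allI impI exI[of _ "\<delta> powr (1 / (2 * p))"] conjI ballI)
    show "\<delta> powr (1 / (2 * p)) > 0" using \<open>\<delta> > 0\<close> by simp
    fix b c Psi t
    assume b: "1 \<le> b" and c: "\<bar>c\<bar> < \<delta> powr (1 / (2 * p)) * b powr (- (1 - a))"
      and Psi: "is_Psi_c p lam Yh Yg c Psi" and t: "t \<in> {- (1 - a) * p * ln b..0}"
    define L where "L = (1 - a) * p * ln b"
    have exp_L: "exp (2 * L) = b powr (2 * p * (1 - a))"
      unfolding L_def powr_def using b by (simp add: algebra_simps)
    have "0 \<le> L" unfolding L_def using a p b by simp
    have small: "\<bar>c\<bar> powr (2 * p) * exp (2 * L) < \<delta>"
      unfolding exp_L using powr_small_amplitude[OF _ \<open>\<delta> > 0\<close> _ c] p b by simp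
    have "- L \<le> t" "t \<le> 0" using t unfolding L_def atLeastAtMost_iff mult_minus_left by auto
    note bound = estimate[OF \<open>0 \<le> L\<close> small Psi this, unfolded exp_L]
    show "\<bar>Psi t - c * Yh t\<bar> \<le> C * \<bar>c\<bar> powr (2 * p + 1) * b powr (2 * p * (1 - a)) * exp (- t / p)"
      using bound by blast
    show "\<bar>deriv Psi t - c * deriv Yh t\<bar> \<le> C * \<bar>c\<bar> powr (2 * p + 1) * b powr (2 * p * (1 - a)) * exp (- t / p)"
      using bound by blast
  qed
qed

theorem mainTheorem8:
  fixes lam p a :: real and U Yg :: "real \<Rightarrow> real"
  assumes "lam \<le> 2" and "p > 0" and "0 < a" and "a < 1"
    and "is_tricomi_U (kummer_alpha p lam) (kummer_beta p) U"
    and "is_Upsilon_g p lam (Upsilon_h U p) Yg"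
  shows "\<exists>b0>0. \<exists>C>0. \<forall>b\<ge>b0. \<exists>c0>0. \<forall>c Psi.
           \<bar>c\<bar> < c0 * b powr (- (1 - a)) \<longrightarrow> is_Psi_c p lam (Upsilon_h U p) Yg c Psi \<longrightarrow>
           (\<forall>t\<in>{- (1 - a) * p * ln b .. 0}.
              \<bar>Psi t - c * Upsilon_h U p t\<bar>
                \<le> C * \<bar>c\<bar> powr (2 * p + 1) * b powr (2 * p * (1 - a)) * exp (- t / p)
            \<and> \<bar>deriv Psi t - c * deriv (Upsilon_h U p) t\<bar>
                \<le> C * \<bar>c\<bar> powr (2 * p + 1) * b powr (2 * p * (1 - a)) * exp (- t / p))"
proof -
  obtain A where "A > 0" and bounds:
    "\<And>s. 0 \<le> s \<Longrightarrow> \<bar>Upsilon_h U p s\<bar> \<le> A * decay_weight lam s"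
    "\<And>s. 0 \<le> s \<Longrightarrow> \<bar>Yg s\<bar> \<le> A * exp (-2 * s) / decay_weight lam s"
    "\<And>s. s \<le> 0 \<Longrightarrow> \<bar>Upsilon_h U p s\<bar> \<le> A * exp (- s / p)"
    using Upsilon_bounds[OF assms(2,5,6)] by blast
  show ?thesis
    using \<open>a < 1\<close> by (intro remainder_estimate_rescaled[OF assms(2,1) \<open>A > 0\<close> _
        Upsilon_h_linear_ode[OF assms(2,5)] bounds]) simp
qed

end
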